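(* A binary relation $\succsim$ on $l_\infty$ satisfies Weak order, Monotonicity, Continuity, ICRP, Convexity, IDIS and Time invariance if and only if there exists a unique grounded, weak$^\star$-lower semicontinuous and convex function $c:\mathcal B\to[0,\infty]$ such that $$I(x)=\min_{p\in\mathcal B}\{\langle x,p\rangle+c(p)\}$$ is a constant equivalent representing $\succsim$.
   Context: $l_\infty$: real bounded sequences $x=(x_0,x_1,\dots)$; $\theta\in\mathbb R$ also a constant sequence; $x\ge y$ coordinatewise. $ba(\mathbb N)$: norm dual of $l_\infty$, pairing $\langle x,\mu\rangle$, weak$^\star$ topology. $\Delta$: finitely additive probability measures on $2^{\mathbb N}$. $\mathcal B$: Banach–Mazur limits, $\mu\in\Delta$ with $\langle x,\mu\rangle=\langle(x_1,x_2,\dots),\mu\rangle$ for all $x$. Grounded: infimum $0$. Constant equivalent: $I$ with $x\sim I(x)$, $x\succsim y\iff I(x)\ge I(y)$. Weak order: complete, transitive. Monotonicity: $x\ge y\Rightarrow x\succsim y$, $1\succ0$. Continuity: for $x\succsim y\succsim z$ the sets $\{\alpha\in[0,1]:\alpha x+(1-\alpha)z\succsim y\}$, $\{\alpha:y\succsim\alpha x+(1-\alpha)z\}$ are closed. ICRP: $x\succsim y\Rightarrow x+\theta\succsim y+\theta$. Convexity: $x\succsim\theta,y\succsim\theta\Rightarrow\lambda x+(1-\lambda)y\succsim\theta$. IDIS: $x+d\succsim x\Rightarrow x+(0,d)\succsim x$, with $(0,d)=(0,d_0,d_1,\dots)$. Time invariance: $x\sim(x_1,x_2,x_3,\dots)$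 for all $x\in l_\infty$. *)

theory Defs
  imports "HOL-Analysis.Analysis" "HOL-Library.Disjoint_Sets"
begin

type_synonym seq = "nat \<Rightarrow> real"
type_synonym setfun = "nat set \<Rightarrow> real"

definition linf :: "seq set" where
  "linf = {x. bounded (range x)}"

definition cst :: "real \<Rightarrow> seq" where
  "cst \<theta> = (\<lambda>_. \<theta>)"

definition fa_prob :: "setfun set" where
  "fa_prob = {\<mu>. (\<forall>A. \<mu> A \<ge> 0) \<and> \<mu> UNIV = 1 \<and>
                 (\<forall>A B. A \<inter> B = {} \<longrightarrow> \<mu> (A \<union> B) = \<mu> A + \<mu> B)}"

text \<open>The pairing (integral of a bounded sequence against a finitely additive
  probability measure), defined as the supremum of lower sums over finite partitions.\<close>
definition pairing :: "seq \<Rightarrow> setfun \<Rightarrow> real" where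
  "pairing x \<mu> = (SUP P \<in> {P. finite P \<and> partition_on UNIV P}.
                    (\<Sum>A\<in>P. Inf (x ` A) * \<mu> A))"

definition BML :: "setfun set" where
  "BML = {\<mu> \<in> fa_prob. \<forall>x \<in> linf. pairing x \<mu> = pairing (\<lambda>n. x (Suc n)) \<mu>}"

definition weak_star :: "setfun topology" where
  "weak_star = topology_generated_by
      {{\<mu>. pairing x \<mu> \<in> U} | x U. x \<in> linf \<and> open U}"

text \<open>Axioms on a binary relation R on l_infinity (R x y means x is weakly preferred to y).\<close>
definition weak_order :: "(seq \<Rightarrow> seq \<Rightarrow> bool) \<Rightarrow> bool" where
  "weak_order R \<longleftrightarrow> (\<forall>x\<in>linf. \<forall>y\<in>linf. R x y \<or> R y x) \<and>
     (\<forall>x\<in>linf. \<forall>y\<in>linf. \<forall>z\<in>linf. R x y \<and> R y z \<longrightarrow> R x z)"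

definition monotonicity :: "(seq \<Rightarrow> seq \<Rightarrow> bool) \<Rightarrow> bool" where
  "monotonicity R \<longleftrightarrow> (\<forall>x\<in>linf. \<forall>y\<in>linf. (\<forall>n. x n \<ge> y n) \<longrightarrow> R x y) \<and>
     R (cst 1) (cst 0) \<and> \<not> R (cst 0) (cst 1)"

definition continuity :: "(seq \<Rightarrow> seq \<Rightarrow> bool) \<Rightarrow> bool" where
  "continuity R \<longleftrightarrow> (\<forall>x\<in>linf. \<forall>y\<in>linf. \<forall>z\<in>linf. R x y \<and> R y z \<longrightarrow>
      closed {\<alpha> \<in> {0..1}. R (\<lambda>n. \<alpha> * x n + (1 - \<alpha>) * z n) y} \<and>
      closed {\<alpha> \<in> {0..1}. R y (\<lambda>n. \<alpha> * x n + (1 - \<alpha>) * z n)})"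

definition ICRP :: "(seq \<Rightarrow> seq \<Rightarrow> bool) \<Rightarrow> bool" where
  "ICRP R \<longleftrightarrow> (\<forall>x\<in>linf. \<forall>y\<in>linf. \<forall>\<theta>::real.
      R x y \<longrightarrow> R (\<lambda>n. x n + \<theta>) (\<lambda>n. y n + \<theta>))"

definition convexity :: "(seq \<Rightarrow> seq \<Rightarrow> bool) \<Rightarrow> bool" where
  "convexity R \<longleftrightarrow> (\<forall>x\<in>linf. \<forall>y\<in>linf. \<forall>\<theta>::real. \<forall>t\<in>{0..1::real}.
      R x (cst \<theta>) \<and> R y (cst \<theta>) \<longrightarrow> R (\<lambda>n. t * x n + (1 - t) * y n) (cst \<theta>))"

definition delay :: "seq \<Rightarrow> seq" where
  "delay d = (\<lambda>n. if n = 0 then 0 else d (n - 1))"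

definition IDIS :: "(seq \<Rightarrow> seq \<Rightarrow> bool) \<Rightarrow> bool" where
  "IDIS R \<longleftrightarrow> (\<forall>x\<in>linf. \<forall>d\<in>linf.
      R (\<lambda>n. x n + d n) x \<longrightarrow> R (\<lambda>n. x n + delay d n) x)"

definition time_invariance :: "(seq \<Rightarrow> seq \<Rightarrow> bool) \<Rightarrow> bool" where
  "time_invariance R \<longleftrightarrow> (\<forall>x\<in>linf. R x (\<lambda>n. x (Suc n)) \<and> R (\<lambda>n. x (Suc n)) x)"

definition grounded :: "(setfun \<Rightarrow> ereal) \<Rightarrow> bool" where
  "grounded c \<longleftrightarrow> (INF p\<in>BML. c p) = 0"

definition weak_star_lsc :: "(setfun \<Rightarrow> ereal) \<Rightarrow> bool" where
  "weak_star_lsc c \<longleftrightarrow>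
     (\<forall>t. closedin (subtopology weak_star BML) {p \<in> BML. c p \<le> t})"

definition convex_cost :: "(setfun \<Rightarrow> ereal) \<Rightarrow> bool" where
  "convex_cost c \<longleftrightarrow> (\<forall>p\<in>BML. \<forall>q\<in>BML. \<forall>t\<in>{0<..<1::real}.
      c (\<lambda>A. t * p A + (1 - t) * q A) \<le> ereal t * c p + ereal (1 - t) * c q)"

definition admissible_cost :: "(setfun \<Rightarrow> ereal) \<Rightarrow> bool" where
  "admissible_cost c \<longleftrightarrow> (\<forall>p\<in>BML. c p \<ge> 0) \<and> grounded c \<and> weak_star_lsc c \<and> convex_cost c"

definition var_I :: "(setfun \<Rightarrow> ereal) \<Rightarrow> seq \<Rightarrow> ereal" where
  "var_I c x = (INF p\<in>BML. ereal (pairing x p) + c p)"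

definition min_represents :: "(setfun \<Rightarrow> ereal) \<Rightarrow> (seq \<Rightarrow> seq \<Rightarrow> bool) \<Rightarrow> bool" where
  "min_represents c R \<longleftrightarrow>
     (\<forall>x\<in>linf. \<exists>p\<in>BML. ereal (pairing x p) + c p = var_I c x) \<and>
     (\<forall>x\<in>linf. \<exists>r::real. var_I c x = ereal r \<and> R x (cst r) \<and> R (cst r) x) \<and>
     (\<forall>x\<in>linf. \<forall>y\<in>linf. R x y \<longleftrightarrow> var_I c x \<ge> var_I c y)"

end

theory Submission
  imports Defs
begin

text \<open>
  Under the axioms every bounded sequence \<open>x\<close> has a constant equivalent \<open>I x\<close>, and \<open>I\<close> is
  monotone, translation invariant, concave (Convexity) and shift invariant (Time invariance).
  IDIS gives \<open>I (x + z - shift z) \<le> I x\<close>, so by Hahn--Banach \<open>I\<close> has at every \<open>x\<close> a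
  supergradient vanishing on the shift differences \<open>z - shift z\<close>; positivity and
  normalisation make it a finitely additive probability, and vanishing on shift differences
  a Banach--Mazur limit.  Hence \<open>I x = min\<^sub>q \<langle>x, q\<rangle> + c\<^sup>* q\<close> for the conjugate
  \<open>c\<^sup>* q = sup\<^sub>y I y - \<langle>y, q\<rangle>\<close>, which is grounded, convex and weak-star lower semicontinuous.
  Any admissible representing cost \<open>c\<close> satisfies \<open>c\<^sup>* \<le> c\<close>; if \<open>c\<^sup>* p < r < c p\<close>, lower
  semicontinuity reduces the separation of \<open>(p, r)\<close> from the epigraph of \<open>c\<close> to finitely
  many coordinates, and the separating sequence exceeds the bound defining \<open>c\<^sup>* p\<close>.
  Conversely a variational \<open>I\<close> inherits the axioms, since Banach--Mazur limits ignore shifts.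
\<close>

section \<open>Hahn--Banach for spaces of real functions\<close>

abbreviation lin_comb :: "real \<Rightarrow> ('i \<Rightarrow> real) \<Rightarrow> real \<Rightarrow> ('i \<Rightarrow> real) \<Rightarrow> ('i \<Rightarrow> real)" where
  "lin_comb a u b v \<equiv> (\<lambda>j. a * u j + b * v j)"

definition fun_subspace :: "('i \<Rightarrow> real) set \<Rightarrow> bool" where
  "fun_subspace W \<longleftrightarrow> W \<noteq> {} \<and> (\<forall>u\<in>W. \<forall>v\<in>W. \<forall>a b. lin_comb a u b v \<in> W)"

definition linear_on :: "('i \<Rightarrow> real) set \<Rightarrow> (('i \<Rightarrow> real) \<Rightarrow> real) \<Rightarrow> bool" where
  "linear_on W F \<longleftrightarrow> (\<forall>u\<in>W. \<forall>v\<in>W. \<forall>a b. F (lin_comb a u b v) = a * F u + b * F v)"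

definition fun_convex_on :: "('i \<Rightarrow> real) set \<Rightarrow> (('i \<Rightarrow> real) \<Rightarrow> real) \<Rightarrow> bool" where
  "fun_convex_on W p \<longleftrightarrow> (\<forall>u\<in>W. \<forall>v\<in>W. \<forall>t. 0 \<le> t \<and> t \<le> 1 \<longrightarrow>
      p (lin_comb t u (1 - t) v) \<le> t * p u + (1 - t) * p v)"

lemma fun_subspaceD: "fun_subspace W \<Longrightarrow> u \<in> W \<Longrightarrow> v \<in> W \<Longrightarrow> lin_comb a u b v \<in> W"
  by (simp add: fun_subspace_def)

lemma linear_onD: "linear_on W F \<Longrightarrow> u \<in> W \<Longrightarrow> v \<in> W \<Longrightarrow> F (lin_comb a u b v) = a * F u + b * F v"
  by (simp add: linear_on_def)

lemma fun_subspace_zero: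
  assumes "fun_subspace W" shows "(\<lambda>j. 0) \<in> W"
proof -
  obtain u where "u \<in> W" using assms by (auto simp: fun_subspace_def)
  then show ?thesis using fun_subspaceD[OF assms, of u u 0 0] by simp
qed

lemma linear_on_zero:
  assumes "linear_on W F" "fun_subspace W" shows "F (\<lambda>j. 0) = 0"
proof -
  obtain u where "u \<in> W" using assms(2) by (auto simp: fun_subspace_def)
  then show ?thesis using linear_onD[OF assms(1), of u u 0 0] by simp
qed

lemma linear_on_sum:
  assumes F: "linear_on W F" and W: "fun_subspace W" and D: "finite D"
    and g: "\<And>k. k \<in> D \<Longrightarrow> g k \<in> W"
  shows "(\<lambda>j. \<Sum>k\<in>D. g k j) \<in> W \<and> F (\<lambda>j. \<Sum>k\<in>D. g k j) = (\<Sum>k\<in>D. F (g k))"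
  using D g
proof (induction D rule: finite_induct)
  case empty
  then show ?case using fun_subspace_zero[OF W] linear_on_zero[OF F W] by simp
next
  case (insert k D)
  then have IH: "(\<lambda>j. \<Sum>k\<in>D. g k j) \<in> W" "F (\<lambda>j. \<Sum>k\<in>D. g k j) = (\<Sum>k\<in>D. F (g k))"
    and gk: "g k \<in> W" by auto
  have "(\<lambda>j. \<Sum>k\<in>insert k D. g k j) = lin_comb 1 (g k) 1 (\<lambda>j. \<Sum>k\<in>D. g k j)"
    using insert(1,2) by simp
  then show ?case
    using fun_subspaceD[OF W gk IH(1), of 1 1] linear_onD[OF F gk IH(1), of 1 1] IH(2) insert(1,2)
    by simp
qed

context
  fixes W S :: "('i \<Rightarrow> real) set" and f p :: "('i \<Rightarrow> real) \<Rightarrow> real"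
  assumes W: "fun_subspace W" and S: "fun_subspace S" and SW: "S \<subseteq> W" and f: "linear_on S f"
    and p: "fun_convex_on W p" and fp: "\<And>u. u \<in> S \<Longrightarrow> f u \<le> p u"
begin

text \<open>Graphs of linear extensions of \<open>f\<close> dominated by \<open>p\<close>, ordered by inclusion for Zorn's lemma.\<close>

definition dominated_graph :: "(('i \<Rightarrow> real) \<times> real) set \<Rightarrow> bool" where
  "dominated_graph G \<longleftrightarrow> G \<subseteq> W \<times> UNIV \<and>
     (\<forall>u a v b \<alpha> \<beta>. (u, a) \<in> G \<longrightarrow> (v, b) \<in> G \<longrightarrow> (lin_comb \<alpha> u \<beta> v, \<alpha> * a + \<beta> * b) \<in> G) \<and>
     (\<forall>u a b. (u, a) \<in> G \<longrightarrow> (u, b) \<in> G \<longrightarrow> a = b) \<and>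
     (\<forall>u\<in>S. (u, f u) \<in> G) \<and>
     (\<forall>u a. (u, a) \<in> G \<longrightarrow> a \<le> p u)"

lemma dominated_graphD:
  assumes "dominated_graph G"
  shows "\<And>u a. (u, a) \<in> G \<Longrightarrow> u \<in> W"
    and "\<And>u a v b \<alpha> \<beta>. (u, a) \<in> G \<Longrightarrow> (v, b) \<in> G \<Longrightarrow> (lin_comb \<alpha> u \<beta> v, \<alpha> * a + \<beta> * b) \<in> G"
    and "\<And>u a b. (u, a) \<in> G \<Longrightarrow> (u, b) \<in> G \<Longrightarrow> a = b"
    and "\<And>u. u \<in> S \<Longrightarrow> (u, f u) \<in> G"
    and "\<And>u a. (u, a) \<in> G \<Longrightarrow> a \<le> p u"
  using assms unfolding dominated_graph_def by blast+

lemma dominated_graphI: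
  assumes "\<And>u a. (u, a) \<in> G \<Longrightarrow> u \<in> W"
    and "\<And>u a v b \<alpha> \<beta>. (u, a) \<in> G \<Longrightarrow> (v, b) \<in> G \<Longrightarrow> (lin_comb \<alpha> u \<beta> v, \<alpha> * a + \<beta> * b) \<in> G"
    and "\<And>u a b. (u, a) \<in> G \<Longrightarrow> (u, b) \<in> G \<Longrightarrow> a = b"
    and "\<And>u. u \<in> S \<Longrightarrow> (u, f u) \<in> G"
    and "\<And>u a. (u, a) \<in> G \<Longrightarrow> a \<le> p u"
  shows "dominated_graph G"
  unfolding dominated_graph_def using assms by fast

lemma dominated_graph_of_f: "dominated_graph {(u, f u) | u. u \<in> S}"
proof (rule dominated_graphI)
  fix u a v b \<alpha> \<beta>
  assume "(u, a) \<in> {(u, f u) | u. u \<in> S}" "(v, b) \<in> {(u, f u) | u. u \<in> S}"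
  then have uv: "u \<in> S" "v \<in> S" "a = f u" "b = f v" by auto
  then show "(lin_comb \<alpha> u \<beta> v, \<alpha> * a + \<beta> * b) \<in> {(u, f u) | u. u \<in> S}"
    using fun_subspaceD[OF S] linear_onD[OF f] by force
qed (use SW fp in auto)

lemma dominated_graph_chain_Union:
  assumes C: "C \<in> chains {G. dominated_graph G}" and ne: "C \<noteq> {}"
  shows "dominated_graph (\<Union>C)"
proof -
  have CG: "\<And>X. X \<in> C \<Longrightarrow> dominated_graph X"
    and chain: "\<And>X Y. X \<in> C \<Longrightarrow> Y \<in> C \<Longrightarrow> X \<subseteq> Y \<or> Y \<subseteq> X"
    using C by (auto simp: chains_def chain_subset_def)
  have two: "\<exists>Z\<in>C. x \<in> Z \<and> y \<in> Z" if xy: "x \<in> \<Union>C" "y \<in> \<Union>C" for x y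
  proof -
    obtain X Y where "X \<in> C" "Y \<in> C" "x \<in> X" "y \<in> Y" using xy by blast
    then show ?thesis using chain[of X Y] by auto
  qed
  show ?thesis
  proof (rule dominated_graphI)
    fix u a v b \<alpha> \<beta> assume "(u, a) \<in> \<Union>C" "(v, b) \<in> \<Union>C"
    then obtain Z where "Z \<in> C" "(u, a) \<in> Z" "(v, b) \<in> Z" using two by blast
    then show "(lin_comb \<alpha> u \<beta> v, \<alpha> * a + \<beta> * b) \<in> \<Union>C"
      using dominated_graphD(2)[OF CG] by blast
  next
    fix u a b assume "(u, a) \<in> \<Union>C" "(u, b) \<in> \<Union>C"
    then obtain Z where "Z \<in> C" "(u, a) \<in> Z" "(u, b) \<in> Z" using two by blast
    then show "a = b" using dominated_graphD(3)[OF CG] by blast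
  next
    fix u assume "u \<in> S"
    obtain X where "X \<in> C" using ne by blast
    then show "(u, f u) \<in> \<Union>C" using dominated_graphD(4)[OF CG] \<open>u \<in> S\<close> by blast
  next
    fix u a assume "(u, a) \<in> \<Union>C"
    then obtain Z where "Z \<in> C" "(u, a) \<in> Z" by blast
    then show "u \<in> W" "a \<le> p u" using dominated_graphD(1,5)[OF CG] by blast+
  qed
qed

lemma dominated_graph_zero:
  assumes M: "dominated_graph M" shows "((\<lambda>j. 0), 0) \<in> M"
proof -
  obtain u where "u \<in> S" using S by (auto simp: fun_subspace_def)
  then have "(u, f u) \<in> M" using dominated_graphD(4)[OF M] by blast
  then show ?thesis using dominated_graphD(2)[OF M, of u "f u" u "f u" 0 0] by simp
qed

text \<open>The two-sided estimate that allows extending the graph in a new direction \<open>v\<close>: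
  a convex combination of \<open>u\<^sub>2 - s\<^sub>2 v\<close> and \<open>u\<^sub>1 + s\<^sub>1 v\<close> eliminates \<open>v\<close>.\<close>

lemma dominated_graph_secant_le:
  assumes M: "dominated_graph M" and v: "v \<in> W"
    and m1: "(u1, a1) \<in> M" and m2: "(u2, a2) \<in> M" and s1: "s1 > 0" and s2: "s2 > 0"
  shows "s1 * (a2 - p (lin_comb 1 u2 (-s2) v)) \<le> s2 * (p (lin_comb 1 u1 s1 v) - a1)"
proof -
  define l where "l = s1 / (s1 + s2)"
  have l: "0 \<le> l" "l \<le> 1" "(s1 + s2) * l = s1" "(s1 + s2) * (1 - l) = s2"
    using s1 s2 by (auto simp: l_def field_simps)
  have v_free: "l * (-s2) + (1 - l) * s1 = 0" using s1 s2 unfolding l_def by (simp add: field_simps)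
  have "lin_comb l u2 (1 - l) u1 = lin_comb l (lin_comb 1 u2 (-s2) v) (1 - l) (lin_comb 1 u1 s1 v)"
  proof
    fix j
    have "l * (1 * u2 j + - s2 * v j) + (1 - l) * (1 * u1 j + s1 * v j)
        = (l * u2 j + (1 - l) * u1 j) + (l * (-s2) + (1 - l) * s1) * v j"
      by (simp add: algebra_simps)
    then show "l * u2 j + (1 - l) * u1 j = l * (1 * u2 j + - s2 * v j) + (1 - l) * (1 * u1 j + s1 * v j)"
      unfolding v_free by simp
  qed
  moreover have "l * a2 + (1 - l) * a1 \<le> p (lin_comb l u2 (1 - l) u1)"
    using dominated_graphD(5)[OF M dominated_graphD(2)[OF M m2 m1]] .
  ultimately have "l * a2 + (1 - l) * a1
      \<le> p (lin_comb l (lin_comb 1 u2 (-s2) v) (1 - l) (lin_comb 1 u1 s1 v))"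
    by simp
  also have "\<dots> \<le> l * p (lin_comb 1 u2 (-s2) v) + (1 - l) * p (lin_comb 1 u1 s1 v)"
    by (rule p[unfolded fun_convex_on_def, rule_format])
      (use l(1,2) fun_subspaceD[OF W dominated_graphD(1)[OF M m2] v, of 1 "-s2"]
        fun_subspaceD[OF W dominated_graphD(1)[OF M m1] v, of 1 s1] in auto)
  finally have "l * a2 + (1 - l) * a1
      \<le> l * p (lin_comb 1 u2 (-s2) v) + (1 - l) * p (lin_comb 1 u1 s1 v)" .
  note convex_ineq = this
  have "(s1 + s2) * l * a2 + (s1 + s2) * (1 - l) * a1
      \<le> (s1 + s2) * l * p (lin_comb 1 u2 (-s2) v) + (s1 + s2) * (1 - l) * p (lin_comb 1 u1 s1 v)"
    using mult_left_mono[OF convex_ineq, of "s1 + s2"] s1 s2 by (simp add: distrib_left mult.assoc)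
  then show ?thesis unfolding l(3,4) by (simp add: algebra_simps)
qed

lemma dominated_graph_extension_value:
  assumes M: "dominated_graph M" and v: "v \<in> W"
  obtains c where "\<And>u a t. (u, a) \<in> M \<Longrightarrow> a + t * c \<le> p (lin_comb 1 u t v)"
proof -
  define L where "L = {(a - p (lin_comb 1 u (-s) v)) / s | u a s. (u, a) \<in> M \<and> s > 0}"
  have z: "((\<lambda>j. 0), 0) \<in> M" by (rule dominated_graph_zero[OF M])
  have secant: "(a2 - p (lin_comb 1 u2 (-s2) v)) / s2 \<le> (p (lin_comb 1 u1 s1 v) - a1) / s1"
    if "(u1, a1) \<in> M" "(u2, a2) \<in> M" "s1 > 0" "s2 > 0" for u1 a1 u2 a2 s1 s2
    using dominated_graph_secant_le[OF M v that] that(3,4) by (simp add: field_simps)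
  have Lne: "L \<noteq> {}"
  proof -
    have "(0 - p (lin_comb 1 (\<lambda>j. 0) (-1) v)) / 1 \<in> L"
      unfolding L_def by (rule CollectI, rule exI[of _ "\<lambda>j. 0"], rule exI[of _ 0], rule exI[of _ 1])
        (use z in simp)
    then show ?thesis by blast
  qed
  have L_le: "y \<le> (p (lin_comb 1 u1 s1 v) - a1) / s1"
    if y: "y \<in> L" and m1: "(u1, a1) \<in> M" and s1: "s1 > 0" for y u1 a1 s1
  proof -
    obtain u a s where "y = (a - p (lin_comb 1 u (-s) v)) / s" "(u, a) \<in> M" "s > 0"
      using y unfolding L_def by blast
    then show ?thesis using secant[OF m1 _ s1] by blast
  qed
  have Lbdd: "bdd_above L"
  proof (rule bdd_aboveI)
    fix y assume "y \<in> L"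
    then show "y \<le> (p (lin_comb 1 (\<lambda>j. 0) 1 v) - 0) / 1" by (rule L_le[OF _ z]) simp
  qed
  define c where "c = Sup L"
  have c_up: "c \<le> (p (lin_comb 1 u s v) - a) / s" if "(u, a) \<in> M" "s > 0" for u a s
    unfolding c_def by (rule cSup_least[OF Lne]) (rule L_le[OF _ that])
  have c_lo: "(a - p (lin_comb 1 u (-s) v)) / s \<le> c" if "(u, a) \<in> M" "s > 0" for u a s
  proof -
    have "(a - p (lin_comb 1 u (-s) v)) / s \<in> L" unfolding L_def
      by (rule CollectI, rule exI[of _ u], rule exI[of _ a], rule exI[of _ s]) (use that in simp)
    then show ?thesis unfolding c_def by (rule cSup_upper[OF _ Lbdd])
  qed
  have "a + t * c \<le> p (lin_comb 1 u t v)" if m: "(u, a) \<in> M" for u a t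
  proof (cases t "0::real" rule: linorder_cases)
    case greater
    then have "c * t \<le> p (lin_comb 1 u t v) - a" using c_up[OF m greater] by (simp add: pos_le_divide_eq)
    then show ?thesis by (simp add: mult.commute)
  next
    case equal
    then show ?thesis using dominated_graphD(5)[OF M m] by simp
  next
    case less
    define X where "X = a - p (lin_comb 1 u t v)"
    have "(a - p (lin_comb 1 u (-(-t)) v)) / (- t) \<le> c" by (rule c_lo[OF m]) (use less in simp)
    then have "X / (- t) \<le> c" by (simp only: minus_minus X_def)
    then have "X \<le> c * (- t)" using less by (simp only: pos_divide_le_eq neg_0_less_iff_less)
    then show ?thesis by (simp add: X_def algebra_simps)
  qed
  then show ?thesis using that by blast
qed

lemma dominated_graph_adjoin_single_valued:
  assumes M: "dominated_graph M" and nv: "\<And>a. (v, a) \<notin> M"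
    and m: "(u, a) \<in> M" "(u', a') \<in> M" and eq: "lin_comb 1 u t v = lin_comb 1 u' t' v"
  shows "a + t * c = a' + t' * c"
proof (cases "t = t'")
  case True
  then have "u = u'" using eq by (auto simp: fun_eq_iff)
  then show ?thesis using dominated_graphD(3)[OF M m(1)] m(2) True by simp
next
  case False
  \<comment> \<open>otherwise \<open>v\<close> would be the combination \<open>(u - u') / (t' - t)\<close> of points of the domain of \<open>M\<close>\<close>
  define d where "d = 1 / (t' - t)"
  have "lin_comb d u (-d) u' = v"
  proof
    fix j
    have "u j - u' j = (t' - t) * v j" using fun_cong[OF eq, of j] by (simp add: algebra_simps)
    then have "d * u j + - d * u' j = d * ((t' - t) * v j)" by (simp add: right_diff_distrib[symmetric])
    then show "d * u j + - d * u' j = v j" using False by (simp add: d_def)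
  qed
  then show ?thesis using dominated_graphD(2)[OF M m, of d "-d"] nv by metis
qed

lemma dominated_graph_extend:
  assumes M: "dominated_graph M" and v: "v \<in> W" and nv: "\<And>a. (v, a) \<notin> M"
  shows "\<exists>G. dominated_graph G \<and> M \<subset> G"
proof -
  obtain c where c: "\<And>u a t. (u, a) \<in> M \<Longrightarrow> a + t * c \<le> p (lin_comb 1 u t v)"
    using dominated_graph_extension_value[OF M v] by blast
  define G where "G = {(lin_comb 1 u t v, a + t * c) | u a t. (u, a) \<in> M}"
  have MG: "M \<subseteq> G"
  proof
    fix x assume "x \<in> M"
    then obtain u a where "x = (u, a)" "(u, a) \<in> M" by (cases x) auto
    then show "x \<in> G" unfolding G_def
      by (intro CollectI exI[of _ u] exI[of _ a] exI[of _ 0]) simp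
  qed
  have vG: "(v, c) \<in> G" unfolding G_def
    by (rule CollectI, rule exI[of _ "\<lambda>j. 0"], rule exI[of _ 0], rule exI[of _ 1])
      (use dominated_graph_zero[OF M] in simp)
  have "dominated_graph G"
  proof (rule dominated_graphI)
    fix x a assume "(x, a) \<in> G"
    then show "x \<in> W"
      unfolding G_def using fun_subspaceD[OF W dominated_graphD(1)[OF M] v] by blast
  next
    fix x a y b \<alpha> \<beta> assume "(x, a) \<in> G" "(y, b) \<in> G"
    then obtain u a0 t u' a0' t' where
      x: "x = lin_comb 1 u t v" "a = a0 + t * c" "(u, a0) \<in> M" and
      y: "y = lin_comb 1 u' t' v" "b = a0' + t' * c" "(u', a0') \<in> M"
      unfolding G_def by blast
    have "lin_comb \<alpha> x \<beta> y = lin_comb 1 (lin_comb \<alpha> u \<beta> u') (\<alpha> * t + \<beta> * t') v"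
      "\<alpha> * a + \<beta> * b = (\<alpha> * a0 + \<beta> * a0') + (\<alpha> * t + \<beta> * t') * c"
      unfolding x y by (simp_all add: fun_eq_iff algebra_simps)
    then show "(lin_comb \<alpha> x \<beta> y, \<alpha> * a + \<beta> * b) \<in> G"
      unfolding G_def using dominated_graphD(2)[OF M x(3) y(3)] by fastforce
  next
    fix x a b assume "(x, a) \<in> G" "(x, b) \<in> G"
    then obtain u a0 t u' a0' t' where
      x: "x = lin_comb 1 u t v" "a = a0 + t * c" "(u, a0) \<in> M" and
      y: "x = lin_comb 1 u' t' v" "b = a0' + t' * c" "(u', a0') \<in> M"
      unfolding G_def by blast
    show "a = b"
      using dominated_graph_adjoin_single_valued[OF M nv x(3) y(3) trans[OF x(1)[symmetric] y(1)]] x(2) y(2)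
      by simp
  next
    fix x a assume "(x, a) \<in> G"
    then show "a \<le> p x" unfolding G_def using c by blast
  qed (use MG dominated_graphD(4)[OF M] in blast)
  then show ?thesis using MG vG nv by blast
qed

theorem hahn_banach:
  "\<exists>F. linear_on W F \<and> (\<forall>u\<in>S. F u = f u) \<and> (\<forall>u\<in>W. F u \<le> p u)"
proof -
  have "\<exists>M\<in>{G. dominated_graph G}. \<forall>X\<in>{G. dominated_graph G}. M \<subseteq> X \<longrightarrow> X = M"
  proof (rule Zorn_Lemma2, intro ballI)
    fix C assume C: "C \<in> chains {G. dominated_graph G}"
    show "\<exists>U\<in>{G. dominated_graph G}. \<forall>X\<in>C. X \<subseteq> U"
    proof (cases "C = {}")
      case True
      then show ?thesis using dominated_graph_of_f by auto
    next
      case False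
      then show ?thesis using dominated_graph_chain_Union[OF C] by auto
    qed
  qed
  then obtain M where M: "dominated_graph M"
    and max: "\<And>X. dominated_graph X \<Longrightarrow> M \<subseteq> X \<Longrightarrow> X = M"
    by blast
  have total: "\<exists>a. (u, a) \<in> M" if "u \<in> W" for u
    using dominated_graph_extend[OF M that] max by blast
  define F where "F u = (THE a. (u, a) \<in> M)" for u
  have F: "F u = a" if "(u, a) \<in> M" for u a
    unfolding F_def using that dominated_graphD(3)[OF M] by blast
  have FM: "(u, F u) \<in> M" if "u \<in> W" for u
    using total[OF that] F by blast
  have "linear_on W F"
    unfolding linear_on_def using FM F dominated_graphD(2)[OF M] by blast
  moreover have "\<forall>u\<in>S. F u = f u" using F dominated_graphD(4)[OF M] by blast
  moreover have "\<forall>u\<in>W. F u \<le> p u" using FM dominated_graphD(5)[OF M] by blast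
  ultimately show ?thesis by blast
qed

end

section \<open>Integration of bounded sequences against finitely additive probabilities\<close>

lemma le_by_multiple_epsilon:
  fixes a b C :: real
  assumes le: "\<And>e. e > 0 \<Longrightarrow> a \<le> b + C * e" and C: "C \<ge> 0"
  shows "a \<le> b"
proof (rule field_le_epsilon)
  fix e :: real assume e: "e > 0"
  have "a \<le> b + C * (e / (C + 1))" by (rule le) (use e C in simp)
  moreover have "C * (e / (C + 1)) \<le> e" using e C by (simp add: field_simps)
  ultimately show "a \<le> b + e" by linarith
qed

lemma eq_0_by_multiple_epsilon:
  fixes d C :: real
  assumes "\<And>e. e > 0 \<Longrightarrow> \<bar>d\<bar> \<le> C * e" and "C \<ge> 0"
  shows "d = 0"
  using le_by_multiple_epsilon[of "\<bar>d\<bar>" 0 C] assms by simp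

lemma linf_boundE:
  assumes "x \<in> linf" obtains B where "\<And>n. \<bar>x n\<bar> \<le> B"
  using assms unfolding linf_def bounded_iff by auto

lemma linfI: "(\<And>n. \<bar>x n\<bar> \<le> B) \<Longrightarrow> x \<in> linf"
  unfolding linf_def bounded_iff by auto

lemma linf_bdd:
  assumes "x \<in> linf" shows "bdd_below (x ` A)" "bdd_above (x ` A)"
proof -
  obtain B where B: "\<And>n. \<bar>x n\<bar> \<le> B" using linf_boundE[OF assms] by blast
  have "-B \<le> x n" "x n \<le> B" for n using B[of n] by linarith+
  then show "bdd_below (x ` A)" "bdd_above (x ` A)"
    by (auto intro!: bdd_belowI[of _ "-B"] bdd_aboveI[of _ B])
qed

lemma linf_lin_comb: "x \<in> linf \<Longrightarrow> y \<in> linf \<Longrightarrow> lin_comb a x b y \<in> linf"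
proof -
  assume "x \<in> linf" "y \<in> linf"
  then obtain B C where B: "\<And>n. \<bar>x n\<bar> \<le> B" and C: "\<And>n. \<bar>y n\<bar> \<le> C" by (metis linf_boundE)
  have "\<bar>a * x n + b * y n\<bar> \<le> \<bar>a\<bar> * B + \<bar>b\<bar> * C" for n
  proof -
    have "\<bar>a * x n + b * y n\<bar> \<le> \<bar>a\<bar> * \<bar>x n\<bar> + \<bar>b\<bar> * \<bar>y n\<bar>"
      by (metis abs_mult abs_triangle_ineq)
    also have "\<dots> \<le> \<bar>a\<bar> * B + \<bar>b\<bar> * C"
      using B[of n] C[of n] by (intro add_mono mult_left_mono) auto
    finally show ?thesis .
  qed
  then show ?thesis by (rule linfI)
qed

lemma linf_const: "(\<lambda>n. t) \<in> linf"
  by (rule linfI[of _ "\<bar>t\<bar>"]) simp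

lemma linf_cst: "cst t \<in> linf"
  using linf_const by (simp add: cst_def)

lemma linf_indicator: "(indicator A :: seq) \<in> linf"
  by (rule linfI[of _ 1]) (simp add: indicator_def)

lemma linf_add: "x \<in> linf \<Longrightarrow> y \<in> linf \<Longrightarrow> (\<lambda>n. x n + y n) \<in> linf"
  using linf_lin_comb[of x y 1 1] by simp

lemma linf_diff: "x \<in> linf \<Longrightarrow> y \<in> linf \<Longrightarrow> (\<lambda>n. x n - y n) \<in> linf"
  using linf_lin_comb[of x y 1 "-1"] by simp

lemma linf_scale: "x \<in> linf \<Longrightarrow> (\<lambda>n. a * x n) \<in> linf"
  using linf_lin_comb[of x x a 0] by simp

lemma linf_add_const: "x \<in> linf \<Longrightarrow> (\<lambda>n. x n + t) \<in> linf"
  using linf_add[OF _ linf_const] by simp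

lemma linf_shift: "x \<in> linf \<Longrightarrow> (\<lambda>n. x (Suc n)) \<in> linf"
proof -
  assume x: "x \<in> linf"
  obtain B where "\<And>n. \<bar>x n\<bar> \<le> B" using linf_boundE[OF x] by blast
  then show ?thesis by (intro linfI[of _ B]) auto
qed

lemma linf_delay: "x \<in> linf \<Longrightarrow> delay x \<in> linf"
proof -
  assume x: "x \<in> linf"
  obtain B where B: "\<And>n. \<bar>x n\<bar> \<le> B" using linf_boundE[OF x] by blast
  then have "0 \<le> B" using abs_ge_zero order_trans by blast
  then show ?thesis using B by (intro linfI[of _ B]) (auto simp: delay_def)
qed

lemma fun_subspace_linf: "fun_subspace linf"
  unfolding fun_subspace_def using linf_lin_comb linf_cst by blast

lemma linf_sum: "finite P \<Longrightarrow> (\<And>A. A \<in> P \<Longrightarrow> g A \<in> linf) \<Longrightarrow> (\<lambda>n. \<Sum>A\<in>P. g A n) \<in> linf"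
  using linear_on_sum[of linf "\<lambda>_. 0" P g] fun_subspace_linf by (simp add: linear_on_def)

lemma fa_prob_nonneg: "\<mu> \<in> fa_prob \<Longrightarrow> \<mu> A \<ge> 0"
  by (simp add: fa_prob_def)

lemma fa_prob_UNIV: "\<mu> \<in> fa_prob \<Longrightarrow> \<mu> UNIV = 1"
  by (simp add: fa_prob_def)

lemma fa_prob_Un: "\<mu> \<in> fa_prob \<Longrightarrow> A \<inter> B = {} \<Longrightarrow> \<mu> (A \<union> B) = \<mu> A + \<mu> B"
  by (simp add: fa_prob_def)

lemma fa_prob_empty: "\<mu> \<in> fa_prob \<Longrightarrow> \<mu> {} = 0"
  using fa_prob_Un[of \<mu> "{}" "{}"] by simp

lemma fa_prob_Union_Int:
  assumes mu: "\<mu> \<in> fa_prob" and "finite F" and "disjoint F"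
  shows "\<mu> (\<Union>F \<inter> B) = (\<Sum>A\<in>F. \<mu> (A \<inter> B))"
  using assms(2,3)
proof (induction F rule: finite_induct)
  case empty
  then show ?case using fa_prob_empty[OF mu] by simp
next
  case (insert A F)
  have "\<Union>(insert A F) \<inter> B = (A \<inter> B) \<union> (\<Union>F \<inter> B)" "(A \<inter> B) \<inter> (\<Union>F \<inter> B) = {}"
    using insert.prems insert.hyps by (auto simp: disjoint_def)
  then show ?case using insert fa_prob_Un[OF mu] by (simp add: disjoint_def)
qed

lemma fa_prob_mix:
  assumes "\<mu> \<in> fa_prob" "\<nu> \<in> fa_prob" "0 \<le> t" "t \<le> 1"
  shows "(\<lambda>A. t * \<mu> A + (1 - t) * \<nu> A) \<in> fa_prob"
proof -
  have "0 \<le> t * \<mu> A + (1 - t) * \<nu> A" for A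
    using assms fa_prob_nonneg[of \<mu> A] fa_prob_nonneg[of \<nu> A] by simp
  then show ?thesis using assms unfolding fa_prob_def by (auto simp: algebra_simps)
qed

definition finite_partitions :: "nat set set set" where
  "finite_partitions = {P. finite P \<and> partition_on UNIV P}"

definition lower_sum :: "seq \<Rightarrow> setfun \<Rightarrow> nat set set \<Rightarrow> real" where
  "lower_sum x \<mu> P = (\<Sum>A\<in>P. Inf (x ` A) * \<mu> A)"

definition upper_sum :: "seq \<Rightarrow> setfun \<Rightarrow> nat set set \<Rightarrow> real" where
  "upper_sum x \<mu> P = (\<Sum>A\<in>P. Sup (x ` A) * \<mu> A)"

definition tag :: "nat set \<Rightarrow> nat" where
  "tag A = (SOME n. n \<in> A)"

definition tagged_sum :: "seq \<Rightarrow> setfun \<Rightarrow> nat set set \<Rightarrow> real" where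
  "tagged_sum x \<mu> P = (\<Sum>A\<in>P. x (tag A) * \<mu> A)"

definition small_oscillation :: "seq \<Rightarrow> real \<Rightarrow> nat set set \<Rightarrow> bool" where
  "small_oscillation x e P \<longleftrightarrow> (\<forall>A\<in>P. \<forall>n\<in>A. \<forall>m\<in>A. \<bar>x n - x m\<bar> \<le> e)"

lemma pairing_eq_SUP_lower_sum: "pairing x \<mu> = (SUP P\<in>finite_partitions. lower_sum x \<mu> P)"
  by (simp add: pairing_def finite_partitions_def lower_sum_def)

lemma finite_partitionsD:
  assumes "P \<in> finite_partitions"
  shows "finite P" "A \<in> P \<Longrightarrow> A \<noteq> {}" "\<exists>A\<in>P. n \<in> A"
    "A \<in> P \<Longrightarrow> B \<in> P \<Longrightarrow> n \<in> A \<Longrightarrow> n \<in> B \<Longrightarrow> A = B"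
  using assms by (auto simp: finite_partitions_def partition_on_def disjoint_def)

lemma UNIV_finite_partitions: "{UNIV} \<in> finite_partitions"
  by (simp add: finite_partitions_def partition_on_def disjoint_def)

lemma tag_in: "A \<noteq> {} \<Longrightarrow> tag A \<in> A"
  unfolding tag_def by (rule someI_ex) auto

lemma finite_partition_sum_Int:
  assumes mu: "\<mu> \<in> fa_prob" and P: "P \<in> finite_partitions"
  shows "(\<Sum>A\<in>P. \<mu> (A \<inter> B)) = \<mu> B"
  using fa_prob_Union_Int[OF mu, of P B] P by (simp add: finite_partitions_def partition_on_def)

lemma finite_partition_sum:
  assumes "\<mu> \<in> fa_prob" "P \<in> finite_partitions"
  shows "(\<Sum>A\<in>P. \<mu> A) = 1"
  using finite_partition_sum_Int[OF assms, of UNIV] fa_prob_UNIV[OF assms(1)] by simp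

text \<open>Compare both sums on the common refinement \<open>{A \<inter> B}\<close>.\<close>

lemma lower_sum_le_upper_sum:
  assumes x: "x \<in> linf" and mu: "\<mu> \<in> fa_prob" and P: "P \<in> finite_partitions"
    and Q: "Q \<in> finite_partitions"
  shows "lower_sum x \<mu> P \<le> upper_sum x \<mu> Q"
proof -
  have "lower_sum x \<mu> P = (\<Sum>A\<in>P. \<Sum>B\<in>Q. Inf (x ` A) * \<mu> (B \<inter> A))"
    unfolding lower_sum_def
    by (intro sum.cong refl) (simp add: sum_distrib_left[symmetric] finite_partition_sum_Int[OF mu Q])
  also have "\<dots> \<le> (\<Sum>A\<in>P. \<Sum>B\<in>Q. Sup (x ` B) * \<mu> (B \<inter> A))"
  proof (intro sum_mono)
    fix A B assume "A \<in> P" "B \<in> Q"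
    show "Inf (x ` A) * \<mu> (B \<inter> A) \<le> Sup (x ` B) * \<mu> (B \<inter> A)"
    proof (cases "B \<inter> A = {}")
      case True
      then show ?thesis using fa_prob_empty[OF mu] by simp
    next
      case False
      then obtain n where n: "n \<in> A" "n \<in> B" by auto
      have "Inf (x ` A) \<le> x n" using n linf_bdd[OF x] by (intro cInf_lower) auto
      also have "x n \<le> Sup (x ` B)" using n linf_bdd[OF x] by (intro cSup_upper) auto
      finally show ?thesis using fa_prob_nonneg[OF mu] by (intro mult_right_mono) auto
    qed
  qed
  also have "\<dots> = (\<Sum>B\<in>Q. \<Sum>A\<in>P. Sup (x ` B) * \<mu> (A \<inter> B))"
    by (subst sum.swap) (simp add: Int_commute)
  also have "\<dots> = upper_sum x \<mu> Q"
    unfolding upper_sum_def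
    by (intro sum.cong refl) (simp add: sum_distrib_left[symmetric] finite_partition_sum_Int[OF mu P])
  finally show ?thesis .
qed

lemma lower_sum_le_pairing:
  assumes x: "x \<in> linf" and mu: "\<mu> \<in> fa_prob" and P: "P \<in> finite_partitions"
  shows "lower_sum x \<mu> P \<le> pairing x \<mu>"
  unfolding pairing_eq_SUP_lower_sum
  using lower_sum_le_upper_sum[OF x mu _ UNIV_finite_partitions] P
  by (intro cSUP_upper bdd_aboveI) auto

lemma pairing_le_upper_sum:
  assumes x: "x \<in> linf" and mu: "\<mu> \<in> fa_prob" and P: "P \<in> finite_partitions"
  shows "pairing x \<mu> \<le> upper_sum x \<mu> P"
  unfolding pairing_eq_SUP_lower_sum using lower_sum_le_upper_sum[OF x mu _ P] UNIV_finite_partitions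
  by (intro cSUP_least) auto

lemma Sup_le_Inf_plus:
  fixes x :: seq
  assumes "A \<noteq> {}" and "\<And>n m. n \<in> A \<Longrightarrow> m \<in> A \<Longrightarrow> \<bar>x n - x m\<bar> \<le> e"
  shows "Sup (x ` A) \<le> Inf (x ` A) + e"
proof -
  have "Sup (x ` A) \<le> x m + e" if "m \<in> A" for m
  proof (rule cSup_least)
    fix v assume "v \<in> x ` A"
    then obtain n where "n \<in> A" "v = x n" by blast
    then show "v \<le> x m + e" using assms(2)[of n m] that by (simp add: abs_le_iff)
  qed (use that in blast)
  then have "Sup (x ` A) - e \<le> Inf (x ` A)"
    by (intro cInf_greatest) (use assms(1) in \<open>auto simp: algebra_simps\<close>)
  then show ?thesis by simp
qed

lemma pairing_tagged_sum:
  assumes x: "x \<in> linf" and mu: "\<mu> \<in> fa_prob" and P: "P \<in> finite_partitions"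
    and f: "small_oscillation x e P"
  shows "\<bar>pairing x \<mu> - tagged_sum x \<mu> P\<bar> \<le> e"
proof -
  have tag: "tag A \<in> A" if "A \<in> P" for A using tag_in finite_partitionsD(2)[OF P that] .
  have "lower_sum x \<mu> P \<le> tagged_sum x \<mu> P"
    unfolding lower_sum_def tagged_sum_def using tag linf_bdd[OF x] fa_prob_nonneg[OF mu]
    by (intro sum_mono mult_right_mono cInf_lower) auto
  moreover have "tagged_sum x \<mu> P \<le> upper_sum x \<mu> P"
    unfolding upper_sum_def tagged_sum_def using tag linf_bdd[OF x] fa_prob_nonneg[OF mu]
    by (intro sum_mono mult_right_mono cSup_upper) auto
  moreover have "upper_sum x \<mu> P \<le> lower_sum x \<mu> P + e"
  proof -
    have "upper_sum x \<mu> P \<le> (\<Sum>A\<in>P. (Inf (x ` A) + e) * \<mu> A)"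
      unfolding upper_sum_def using f finite_partitionsD(2)[OF P] fa_prob_nonneg[OF mu]
      by (intro sum_mono mult_right_mono Sup_le_Inf_plus) (auto simp: small_oscillation_def)
    also have "\<dots> = lower_sum x \<mu> P + e"
      using finite_partition_sum[OF mu P]
      by (simp add: lower_sum_def distrib_right sum.distrib sum_distrib_left[symmetric])
    finally show ?thesis .
  qed
  ultimately show ?thesis
    using lower_sum_le_pairing[OF x mu P] pairing_le_upper_sum[OF x mu P] by linarith
qed

text \<open>Two bounded sequences are simultaneously \<open>e\<close>-fine on the level sets of
  \<open>(\<lfloor>x/e\<rfloor>, \<lfloor>y/e\<rfloor>)\<close>, which take finitely many values.\<close>

lemma floor_div_range_finite:
  assumes x: "x \<in> linf" and e: "e > 0"
  shows "finite (range (\<lambda>n. \<lfloor>x n / e\<rfloor>))"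
proof -
  obtain B where B: "\<And>n. \<bar>x n\<bar> \<le> B" using linf_boundE[OF x] by blast
  have "\<lfloor>x n / e\<rfloor> \<in> {\<lfloor>-B / e\<rfloor>..\<lceil>B / e\<rceil>}" for n
  proof -
    have "-B \<le> x n" "x n \<le> B" using B[of n] by linarith+
    then have "-B / e \<le> x n / e" "x n / e \<le> B / e"
      using e divide_right_mono[of "-B" "x n" e] divide_right_mono[of "x n" B e] by simp_all
    then show ?thesis by (simp add: floor_mono) linarith
  qed
  then show ?thesis by (meson finite_atLeastAtMost_int finite_subset image_subsetI)
qed

lemma common_small_oscillation_partition:
  assumes x: "x \<in> linf" and y: "y \<in> linf" and e: "e > 0"
  obtains P where "P \<in> finite_partitions" "small_oscillation x e P" "small_oscillation y e P"
proof -
  define g where "g n = (\<lfloor>x n / e\<rfloor>, \<lfloor>y n / e\<rfloor>)" for n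
  define P where "P = (\<lambda>b. g -` {b}) ` range g"
  have "range g \<subseteq> range (\<lambda>n. \<lfloor>x n / e\<rfloor>) \<times> range (\<lambda>n. \<lfloor>y n / e\<rfloor>)"
    by (auto simp: g_def)
  then have "finite (range g)"
    using floor_div_range_finite[OF x e] floor_div_range_finite[OF y e]
    by (meson finite_SigmaI finite_subset)
  then have "P \<in> finite_partitions"
    unfolding finite_partitions_def P_def partition_on_def disjoint_def by auto
  moreover have close: "\<bar>z n - z m\<bar> \<le> e" if "\<lfloor>z n / e\<rfloor> = \<lfloor>z m / e\<rfloor>" for z :: seq and n m
  proof -
    have "\<bar>z n / e - z m / e\<bar> \<le> 1" using that by linarith
    then show ?thesis using e by (simp add: diff_divide_distrib[symmetric] abs_divide divide_le_eq)
  qed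
  have "small_oscillation x e P" "small_oscillation y e P"
    unfolding small_oscillation_def P_def g_def using close by auto
  ultimately show ?thesis using that by blast
qed

lemma small_oscillation_lin_comb:
  assumes "small_oscillation x e P" "small_oscillation y e P"
  shows "small_oscillation (lin_comb a x b y) ((\<bar>a\<bar> + \<bar>b\<bar>) * e) P"
  unfolding small_oscillation_def
proof (intro ballI)
  fix A n m assume "A \<in> P" "n \<in> A" "m \<in> A"
  then have h: "\<bar>x n - x m\<bar> \<le> e" "\<bar>y n - y m\<bar> \<le> e" using assms unfolding small_oscillation_def by blast+
  have "\<bar>(a * x n + b * y n) - (a * x m + b * y m)\<bar> = \<bar>a * (x n - x m) + b * (y n - y m)\<bar>"
    by (simp add: algebra_simps)
  also have "\<dots> \<le> \<bar>a\<bar> * \<bar>x n - x m\<bar> + \<bar>b\<bar> * \<bar>y n - y m\<bar>"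
    by (metis abs_mult abs_triangle_ineq)
  also have "\<dots> \<le> \<bar>a\<bar> * e + \<bar>b\<bar> * e" using h by (intro add_mono mult_left_mono) auto
  finally show "\<bar>a * x n + b * y n - (a * x m + b * y m)\<bar> \<le> (\<bar>a\<bar> + \<bar>b\<bar>) * e"
    by (simp add: algebra_simps)
qed

lemma pairing_lin_comb:
  assumes x: "x \<in> linf" and y: "y \<in> linf" and mu: "\<mu> \<in> fa_prob"
  shows "pairing (lin_comb a x b y) \<mu> = a * pairing x \<mu> + b * pairing y \<mu>"
proof -
  let ?z = "lin_comb a x b y"
  have "pairing ?z \<mu> - (a * pairing x \<mu> + b * pairing y \<mu>) = 0"
  proof (rule eq_0_by_multiple_epsilon[of _ "2 * (\<bar>a\<bar> + \<bar>b\<bar>)"])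
    fix e :: real assume e: "e > 0"
    obtain P where P: "P \<in> finite_partitions" "small_oscillation x e P" "small_oscillation y e P"
      using common_small_oscillation_partition[OF x y e] by blast
    have "\<bar>pairing ?z \<mu> - tagged_sum ?z \<mu> P\<bar> \<le> (\<bar>a\<bar> + \<bar>b\<bar>) * e"
      using pairing_tagged_sum[OF linf_lin_comb[OF x y] mu P(1) small_oscillation_lin_comb[OF P(2,3)]] .
    moreover have "\<bar>a * (pairing x \<mu> - tagged_sum x \<mu> P)\<bar> \<le> \<bar>a\<bar> * e"
      using pairing_tagged_sum[OF x mu P(1,2)] by (simp add: abs_mult mult_left_mono)
    moreover have "\<bar>b * (pairing y \<mu> - tagged_sum y \<mu> P)\<bar> \<le> \<bar>b\<bar> * e"
      using pairing_tagged_sum[OF y mu P(1,3)] by (simp add: abs_mult mult_left_mono)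
    moreover have "tagged_sum ?z \<mu> P = a * tagged_sum x \<mu> P + b * tagged_sum y \<mu> P"
      unfolding tagged_sum_def by (simp add: sum.distrib sum_distrib_left algebra_simps)
    ultimately show "\<bar>pairing ?z \<mu> - (a * pairing x \<mu> + b * pairing y \<mu>)\<bar> \<le> 2 * (\<bar>a\<bar> + \<bar>b\<bar>) * e"
      by (simp add: algebra_simps abs_le_iff; linarith)
  qed simp
  then show ?thesis by simp
qed

lemma pairing_mono:
  assumes x: "x \<in> linf" and y: "y \<in> linf" and mu: "\<mu> \<in> fa_prob" and le: "\<And>n. x n \<le> y n"
  shows "pairing x \<mu> \<le> pairing y \<mu>"
proof (rule le_by_multiple_epsilon[of _ _ 2])
  fix e :: real assume e: "e > 0"
  obtain P where P: "P \<in> finite_partitions" "small_oscillation x e P" "small_oscillation y e P"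
    using common_small_oscillation_partition[OF x y e] by blast
  have "tagged_sum x \<mu> P \<le> tagged_sum y \<mu> P" unfolding tagged_sum_def
    using le fa_prob_nonneg[OF mu] by (intro sum_mono mult_right_mono) auto
  then show "pairing x \<mu> \<le> pairing y \<mu> + 2 * e"
    using pairing_tagged_sum[OF x mu P(1,2)] pairing_tagged_sum[OF y mu P(1,3)]
    by (simp add: abs_le_iff)
qed simp

lemma pairing_const: "\<mu> \<in> fa_prob \<Longrightarrow> pairing (\<lambda>n. t) \<mu> = t"
  using pairing_tagged_sum[OF linf_const _ UNIV_finite_partitions, of \<mu> t 0]
  by (simp add: small_oscillation_def tagged_sum_def fa_prob_UNIV)

lemma pairing_cst: "\<mu> \<in> fa_prob \<Longrightarrow> pairing (cst t) \<mu> = t"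
  by (simp add: cst_def pairing_const)

lemma pairing_add:
  "x \<in> linf \<Longrightarrow> y \<in> linf \<Longrightarrow> \<mu> \<in> fa_prob \<Longrightarrow> pairing (\<lambda>n. x n + y n) \<mu> = pairing x \<mu> + pairing y \<mu>"
  using pairing_lin_comb[of x y \<mu> 1 1] by simp

lemma pairing_scale: "x \<in> linf \<Longrightarrow> \<mu> \<in> fa_prob \<Longrightarrow> pairing (\<lambda>n. a * x n) \<mu> = a * pairing x \<mu>"
  using pairing_lin_comb[of x x \<mu> a 0] by simp

lemma pairing_add_const: "x \<in> linf \<Longrightarrow> \<mu> \<in> fa_prob \<Longrightarrow> pairing (\<lambda>n. x n + t) \<mu> = pairing x \<mu> + t"
  using pairing_add[OF _ linf_const] pairing_const by simp

lemma pairing_sum: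
  assumes F: "finite F" and g: "\<And>G. G \<in> F \<Longrightarrow> g G \<in> linf" and mu: "\<mu> \<in> fa_prob"
  shows "pairing (\<lambda>n. \<Sum>G\<in>F. a G * g G n) \<mu> = (\<Sum>G\<in>F. a G * pairing (g G) \<mu>)"
proof -
  have "linear_on linf (\<lambda>x. pairing x \<mu>)"
    unfolding linear_on_def using pairing_lin_comb[OF _ _ mu] by blast
  then show ?thesis
    using linear_on_sum[OF _ fun_subspace_linf F, of "\<lambda>x. pairing x \<mu>" "\<lambda>G n. a G * g G n"]
      linf_scale[OF g] pairing_scale[OF g mu] by simp
qed

lemma pairing_mix:
  assumes x: "x \<in> linf" and mu: "\<mu> \<in> fa_prob" and nu: "\<nu> \<in> fa_prob" and t: "0 \<le> t" "t \<le> 1"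
  shows "pairing x (\<lambda>A. t * \<mu> A + (1 - t) * \<nu> A) = t * pairing x \<mu> + (1 - t) * pairing x \<nu>"
proof -
  let ?m = "\<lambda>A. t * \<mu> A + (1 - t) * \<nu> A"
  have "pairing x ?m - (t * pairing x \<mu> + (1 - t) * pairing x \<nu>) = 0"
  proof (rule eq_0_by_multiple_epsilon[of _ 2])
    fix e :: real assume e: "e > 0"
    obtain P where P: "P \<in> finite_partitions" "small_oscillation x e P" using common_small_oscillation_partition[OF x x e] by blast
    have "tagged_sum x ?m P = t * tagged_sum x \<mu> P + (1 - t) * tagged_sum x \<nu> P"
      unfolding tagged_sum_def sum_distrib_left sum.distrib[symmetric]
      by (intro sum.cong refl) (simp add: algebra_simps)
    moreover have "\<bar>pairing x ?m - tagged_sum x ?m P\<bar> \<le> e"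
      using pairing_tagged_sum[OF x fa_prob_mix[OF mu nu t] P] .
    moreover have "\<bar>t * (pairing x \<mu> - tagged_sum x \<mu> P)\<bar> \<le> t * e"
      using pairing_tagged_sum[OF x mu P] t by (simp add: abs_mult mult_left_mono)
    moreover have "\<bar>(1 - t) * (pairing x \<nu> - tagged_sum x \<nu> P)\<bar> \<le> (1 - t) * e"
      using pairing_tagged_sum[OF x nu P] t by (simp add: abs_mult mult_left_mono)
    ultimately show "\<bar>pairing x ?m - (t * pairing x \<mu> + (1 - t) * pairing x \<nu>)\<bar> \<le> 2 * e"
      using t by (simp add: algebra_simps abs_le_iff; linarith)
  qed simp
  then show ?thesis by simp
qed

lemma pairing_lipschitz:
  assumes x: "x \<in> linf" and y: "y \<in> linf" and mu: "\<mu> \<in> fa_prob" and B: "\<And>n. \<bar>x n - y n\<bar> \<le> B"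
  shows "\<bar>pairing x \<mu> - pairing y \<mu>\<bar> \<le> B"
proof -
  have "x n \<le> y n + B" "y n \<le> x n + B" for n using B[of n] by (simp_all add: abs_le_iff)
  then have "pairing x \<mu> \<le> pairing (\<lambda>n. y n + B) \<mu>" "pairing y \<mu> \<le> pairing (\<lambda>n. x n + B) \<mu>"
    by (auto intro!: pairing_mono x y mu linf_add_const)
  then show ?thesis using pairing_add_const[OF x mu] pairing_add_const[OF y mu] by (simp add: abs_le_iff)
qed

lemma BML_fa_prob: "q \<in> BML \<Longrightarrow> q \<in> fa_prob"
  by (simp add: BML_def)

lemma BML_pairing_shift: "q \<in> BML \<Longrightarrow> x \<in> linf \<Longrightarrow> pairing (\<lambda>n. x (Suc n)) q = pairing x q"
  by (simp add: BML_def)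

lemma BML_mix:
  assumes p: "p \<in> BML" and q: "q \<in> BML" and t: "0 \<le> t" "t \<le> 1"
  shows "(\<lambda>A. t * p A + (1 - t) * q A) \<in> BML"
  using fa_prob_mix[OF BML_fa_prob[OF p] BML_fa_prob[OF q] t]
    pairing_mix[OF _ BML_fa_prob[OF p] BML_fa_prob[OF q] t] linf_shift
    BML_pairing_shift[OF p] BML_pairing_shift[OF q]
  unfolding BML_def by auto
section \<open>Positive functionals on bounded sequences\<close>

context
  fixes \<Lambda> :: "seq \<Rightarrow> real"
  assumes lin: "linear_on linf \<Lambda>"
    and pos: "\<And>y. y \<in> linf \<Longrightarrow> (\<And>n. y n \<ge> 0) \<Longrightarrow> \<Lambda> y \<ge> 0"
    and one: "\<Lambda> (\<lambda>n. 1) = 1"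
begin

lemma positive_functional_add: "u \<in> linf \<Longrightarrow> v \<in> linf \<Longrightarrow> \<Lambda> (\<lambda>n. u n + v n) = \<Lambda> u + \<Lambda> v"
  using linear_onD[OF lin, of u v 1 1] by simp

lemma positive_functional_scale: "u \<in> linf \<Longrightarrow> \<Lambda> (\<lambda>n. a * u n) = a * \<Lambda> u"
  using linear_onD[OF lin, of u u a 0] by simp

lemma positive_functional_mono: "u \<in> linf \<Longrightarrow> v \<in> linf \<Longrightarrow> (\<And>n. u n \<le> v n) \<Longrightarrow> \<Lambda> u \<le> \<Lambda> v"
  using pos[of "\<lambda>n. v n - u n"] linear_onD[OF lin, of v u 1 "-1"] linf_diff[of v u] by simp

lemma positive_functional_const: "\<Lambda> (\<lambda>n. t) = t"
  using linear_onD[OF lin linf_const linf_const, of t 1 0 1] one by simp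

lemma positive_functional_fa_prob: "(\<lambda>A. \<Lambda> (indicator A)) \<in> fa_prob"
  unfolding fa_prob_def
proof (intro CollectI conjI allI impI)
  fix A show "\<Lambda> (indicator A) \<ge> 0" using pos[OF linf_indicator] by simp
next
  show "\<Lambda> (indicator UNIV) = 1" using one by simp
next
  fix A B :: "nat set" assume "A \<inter> B = {}"
  then have "(indicator (A \<union> B) :: seq) = (\<lambda>n. indicator A n + indicator B n)"
    by (auto simp: fun_eq_iff indicator_def)
  then show "\<Lambda> (indicator (A \<union> B)) = \<Lambda> (indicator A) + \<Lambda> (indicator B)"
    using positive_functional_add[OF linf_indicator linf_indicator] by simp
qed

text \<open>On a partition on whose blocks \<open>x\<close> oscillates by at most \<open>e\<close>, the step function
  \<open>\<Sum>A\<in>P. x (tag A) * indicator A\<close> is uniformly \<open>e\<close>-close to \<open>x\<close> and is mapped to the tagged sum.\<close>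

lemma positive_functional_pairing:
  assumes x: "x \<in> linf"
  shows "pairing x (\<lambda>A. \<Lambda> (indicator A)) = \<Lambda> x"
proof -
  let ?\<mu> = "\<lambda>A. \<Lambda> (indicator A)"
  have "pairing x ?\<mu> - \<Lambda> x = 0"
  proof (rule eq_0_by_multiple_epsilon[of _ 2])
    fix e :: real assume e: "e > 0"
    obtain P where P: "P \<in> finite_partitions" "small_oscillation x e P"
      using common_small_oscillation_partition[OF x x e] by blast
    define s where "s = (\<lambda>n. \<Sum>A\<in>P. x (tag A) * indicator A n)"
    have fin: "finite P" using finite_partitionsD(1)[OF P(1)] .
    have s: "s \<in> linf" unfolding s_def using fin by (intro linf_sum linf_scale linf_indicator)
    have "\<Lambda> s = (\<Sum>A\<in>P. \<Lambda> (\<lambda>n. x (tag A) * indicator A n))"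
      using linear_on_sum[OF lin fun_subspace_linf fin, of "\<lambda>A n. x (tag A) * indicator A n"]
        linf_scale[OF linf_indicator] unfolding s_def by blast
    also have "\<dots> = tagged_sum x ?\<mu> P"
      unfolding tagged_sum_def using positive_functional_scale[OF linf_indicator] by simp
    finally have Ls: "\<Lambda> s = tagged_sum x ?\<mu> P" .
    have close: "\<bar>x n - s n\<bar> \<le> e" for n
    proof -
      obtain A where A: "A \<in> P" "n \<in> A" using finite_partitionsD(3)[OF P(1)] by blast
      have "s n = (\<Sum>B\<in>P. if B = A then x (tag A) else 0)"
        unfolding s_def
      proof (intro sum.cong refl)
        fix B assume B: "B \<in> P"
        then have "n \<in> B \<longleftrightarrow> B = A" using finite_partitionsD(4)[OF P(1) A(1) B A(2)] A(2) by blast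
        then show "x (tag B) * indicator B n = (if B = A then x (tag A) else 0)" by auto
      qed
      also have "\<dots> = x (tag A)" using A(1) fin by simp
      finally show ?thesis
        using P(2) A tag_in[OF finite_partitionsD(2)[OF P(1) A(1)]] unfolding small_oscillation_def by auto
    qed
    have "x n \<le> s n + e" "s n \<le> x n + e" for n using close[of n] by (simp_all add: abs_le_iff)
    then have "\<Lambda> x \<le> \<Lambda> (\<lambda>n. s n + e)" "\<Lambda> s \<le> \<Lambda> (\<lambda>n. x n + e)"
      by (intro positive_functional_mono x s linf_add_const; simp)+
    then have "\<bar>\<Lambda> x - \<Lambda> s\<bar> \<le> e"
      using positive_functional_add[OF x linf_const] positive_functional_add[OF s linf_const]
        positive_functional_const[of e] by (simp add: abs_le_iff)
    then show "\<bar>pairing x ?\<mu> - \<Lambda> x\<bar> \<le> 2 * e"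
      using pairing_tagged_sum[OF x positive_functional_fa_prob P] Ls by (simp add: abs_le_iff)
  qed simp
  then show ?thesis by simp
qed

lemma shift_invariant_positive_functional_BML:
  assumes shift: "\<And>z. z \<in> linf \<Longrightarrow> \<Lambda> (\<lambda>n. z (Suc n)) = \<Lambda> z"
  shows "(\<lambda>A. \<Lambda> (indicator A)) \<in> BML"
proof -
  let ?\<mu> = "\<lambda>A. \<Lambda> (indicator A)"
  have "pairing z ?\<mu> = pairing (\<lambda>n. z (Suc n)) ?\<mu>" if z: "z \<in> linf" for z
    using positive_functional_pairing[OF z] positive_functional_pairing[OF linf_shift[OF z]] shift[OF z]
    by simp
  then show ?thesis unfolding BML_def using positive_functional_fa_prob by blast
qed

end
section \<open>The constant equivalent\<close>

locale axiomatic_preference =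
  fixes R :: "seq \<Rightarrow> seq \<Rightarrow> bool"
  assumes weak_order: "weak_order R" and monotonicity: "monotonicity R"
    and continuity: "continuity R" and ICRP: "ICRP R" and convexity: "convexity R"
    and IDIS: "IDIS R" and time_invariance: "time_invariance R"
begin

lemma R_complete: "x \<in> linf \<Longrightarrow> y \<in> linf \<Longrightarrow> R x y \<or> R y x"
  using weak_order unfolding weak_order_def by blast

lemma R_trans: "x \<in> linf \<Longrightarrow> y \<in> linf \<Longrightarrow> z \<in> linf \<Longrightarrow> R x y \<Longrightarrow> R y z \<Longrightarrow> R x z"
  using weak_order unfolding weak_order_def by blast

lemma R_mono: "x \<in> linf \<Longrightarrow> y \<in> linf \<Longrightarrow> (\<And>n. y n \<le> x n) \<Longrightarrow> R x y"
  using monotonicity unfolding monotonicity_def by blast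

lemma R_refl: "x \<in> linf \<Longrightarrow> R x x"
  using R_mono by blast

lemma R_add_const: "x \<in> linf \<Longrightarrow> y \<in> linf \<Longrightarrow> R x y \<Longrightarrow> R (\<lambda>n. x n + t) (\<lambda>n. y n + t)"
  using ICRP unfolding ICRP_def by blast

text \<open>If \<open>cst b\<close> were weakly preferred to \<open>cst a\<close> for some \<open>a > b\<close>, invariance under
  translations would iterate this to \<open>cst 0 \<succsim> cst (k (a - b))\<close> for all \<open>k\<close>, contradicting
  \<open>1 \<succ> 0\<close> by monotonicity.\<close>

lemma R_cst_iff: "R (cst b) (cst a) \<longleftrightarrow> a \<le> b"
proof
  assume ba: "R (cst b) (cst a)"
  show "a \<le> b"
  proof (rule ccontr)
    assume "\<not> a \<le> b"
    then have h: "a - b > 0" by simp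
    have h_step: "R (cst 0) (cst (a - b))"
      using R_add_const[OF linf_cst linf_cst ba, of "-b"] by (simp add: cst_def)
    have multiple: "R (cst 0) (cst (real k * (a - b)))" for k
    proof (induction k)
      case 0
      then show ?case using R_refl[OF linf_cst] by (simp add: cst_def)
    next
      case (Suc k)
      have "R (cst (a - b)) (cst (real k * (a - b) + (a - b)))"
        using R_add_const[OF linf_cst linf_cst Suc, of "a - b"] by (simp add: cst_def)
      then show ?case
        using R_trans[OF linf_cst linf_cst linf_cst h_step] by (simp add: algebra_simps)
    qed
    obtain k :: nat where "1 / (a - b) \<le> real k" using real_arch_simple by blast
    then have "1 \<le> real k * (a - b)" using h by (simp add: field_simps)
    then have "R (cst (real k * (a - b))) (cst 1)" by (intro R_mono linf_cst) (simp add: cst_def)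
    then have "R (cst 0) (cst 1)" using R_trans[OF linf_cst linf_cst linf_cst multiple] by blast
    then show False using monotonicity unfolding monotonicity_def by blast
  qed
next
  assume "a \<le> b"
  then show "R (cst b) (cst a)" by (intro R_mono linf_cst) (simp add: cst_def)
qed

text \<open>The mixtures \<open>\<alpha> cst B + (1 - \<alpha>) cst (-B)\<close> above and below \<open>x\<close> form two closed sets
  covering the connected interval \<open>[0, 1]\<close>; a common point is a constant equivalent.\<close>

lemma const_equiv_exists:
  assumes x: "x \<in> linf" shows "\<exists>t. R x (cst t) \<and> R (cst t) x"
proof -
  obtain B where B: "\<And>n. \<bar>x n\<bar> \<le> B" using linf_boundE[OF x] by blast
  let ?m = "\<lambda>\<alpha>::real. lin_comb \<alpha> (cst B) (1 - \<alpha>) (cst (-B))"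
  have m: "?m \<alpha> = cst (\<alpha> * B + (1 - \<alpha>) * (-B))" for \<alpha> by (simp add: cst_def)
  have le: "x n \<le> B" "-B \<le> x n" for n using B[of n] by linarith+
  have RB: "R (cst B) x" by (rule R_mono[OF linf_cst x]) (simp add: cst_def le)
  have Rb: "R x (cst (-B))" by (rule R_mono[OF x linf_cst]) (simp add: cst_def le)
  define T1 where "T1 = {\<alpha> \<in> {0..1}. R (?m \<alpha>) x}"
  define T2 where "T2 = {\<alpha> \<in> {0..1}. R x (?m \<alpha>)}"
  have closed: "closed T1" "closed T2"
    using continuity RB Rb linf_cst x unfolding continuity_def T1_def T2_def by blast+
  have "1 \<in> T1" "0 \<in> T2" using RB Rb unfolding T1_def T2_def by (simp_all add: cst_def)
  moreover have cover: "{0..1} \<subseteq> T1 \<union> T2"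
    unfolding T1_def T2_def using R_complete[OF _ x] m linf_cst by auto
  ultimately have "T1 \<inter> T2 \<inter> {0..1} \<noteq> {}"
    using connected_closedD[OF connected_Icc _ cover closed] by fastforce
  then obtain \<alpha> where "\<alpha> \<in> T1" "\<alpha> \<in> T2" by blast
  then show ?thesis unfolding T1_def T2_def m by blast
qed

definition const_equiv :: "seq \<Rightarrow> real" where
  "const_equiv x = (SOME t. R x (cst t) \<and> R (cst t) x)"

lemma const_equiv: "x \<in> linf \<Longrightarrow> R x (cst (const_equiv x)) \<and> R (cst (const_equiv x)) x"
  unfolding const_equiv_def using const_equiv_exists by (rule someI_ex)

lemma R_iff_const_equiv_le:
  assumes x: "x \<in> linf" and y: "y \<in> linf" shows "R x y \<longleftrightarrow> const_equiv y \<le> const_equiv x"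
proof
  assume "R x y"
  then have "R (cst (const_equiv x)) (cst (const_equiv y))"
    using R_trans[OF linf_cst x linf_cst] R_trans[OF x y linf_cst] const_equiv[OF x] const_equiv[OF y]
    by blast
  then show "const_equiv y \<le> const_equiv x" using R_cst_iff by blast
next
  assume "const_equiv y \<le> const_equiv x"
  then have "R (cst (const_equiv x)) (cst (const_equiv y))" using R_cst_iff by blast
  then show "R x y"
    using R_trans[OF x linf_cst y] R_trans[OF x linf_cst linf_cst] const_equiv[OF x] const_equiv[OF y]
    by blast
qed

lemma const_equiv_unique:
  assumes x: "x \<in> linf" and "R x (cst t)" "R (cst t) x" shows "const_equiv x = t"
proof -
  have "R (cst (const_equiv x)) (cst t)" "R (cst t) (cst (const_equiv x))"
    using R_trans[OF linf_cst x linf_cst] const_equiv[OF x] assms(2,3) by blast+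
  then show ?thesis using R_cst_iff by (meson antisym)
qed

lemma const_equiv_cst: "const_equiv (cst t) = t"
  using const_equiv_unique[OF linf_cst R_refl[OF linf_cst] R_refl[OF linf_cst]] .

lemma const_equiv_mono: "x \<in> linf \<Longrightarrow> y \<in> linf \<Longrightarrow> (\<And>n. x n \<le> y n) \<Longrightarrow> const_equiv x \<le> const_equiv y"
  using R_iff_const_equiv_le R_mono by blast

lemma const_equiv_add_const:
  assumes x: "x \<in> linf" shows "const_equiv (\<lambda>n. x n + t) = const_equiv x + t"
proof (rule const_equiv_unique[OF linf_add_const[OF x]])
  show "R (\<lambda>n. x n + t) (cst (const_equiv x + t))" "R (cst (const_equiv x + t)) (\<lambda>n. x n + t)"
    using R_add_const[OF x linf_cst, of _ t] R_add_const[OF linf_cst x, of _ t] const_equiv[OF x]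
    by (simp_all add: cst_def)
qed

text \<open>Normalise \<open>x\<close> and \<open>y\<close> to constant equivalent \<open>0\<close> by translation invariance and
  apply Convexity with \<open>\<theta> = 0\<close>.\<close>

lemma const_equiv_concave:
  assumes x: "x \<in> linf" and y: "y \<in> linf" and t: "0 \<le> t" "t \<le> 1"
  shows "t * const_equiv x + (1 - t) * const_equiv y \<le> const_equiv (lin_comb t x (1 - t) y)"
proof -
  let ?x = "\<lambda>n. x n - const_equiv x" and ?y = "\<lambda>n. y n - const_equiv y"
  define c where "c = t * const_equiv x + (1 - t) * const_equiv y"
  have x': "?x \<in> linf" and y': "?y \<in> linf" using linf_diff[OF _ linf_const] x y by blast+
  have "const_equiv ?x = 0" "const_equiv ?y = 0"
    using const_equiv_add_const[OF x, of "- const_equiv x"] const_equiv_add_const[OF y, of "- const_equiv y"]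
    by simp_all
  then have "R ?x (cst 0)" "R ?y (cst 0)"
    using R_iff_const_equiv_le[OF x' linf_cst] R_iff_const_equiv_le[OF y' linf_cst] const_equiv_cst by auto
  then have "R (lin_comb t ?x (1 - t) ?y) (cst 0)"
    using convexity x' y' t unfolding convexity_def by auto
  moreover have "lin_comb t ?x (1 - t) ?y = (\<lambda>n. lin_comb t x (1 - t) y n - c)"
    by (simp add: fun_eq_iff algebra_simps c_def)
  moreover have "const_equiv (\<lambda>n. lin_comb t x (1 - t) y n - c) = const_equiv (lin_comb t x (1 - t) y) - c"
    using const_equiv_add_const[OF linf_lin_comb[OF x y], where t = "- c"] by simp
  ultimately show ?thesis
    using R_iff_const_equiv_le[OF linf_diff[OF linf_lin_comb[OF x y] linf_const] linf_cst] const_equiv_cst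
    by (auto simp: c_def)
qed

lemma const_equiv_shift: "x \<in> linf \<Longrightarrow> const_equiv (\<lambda>n. x (Suc n)) = const_equiv x"
  using time_invariance R_iff_const_equiv_le[OF _ linf_shift] R_iff_const_equiv_le[OF linf_shift]
  unfolding time_invariance_def by (meson antisym)

text \<open>IDIS and time invariance combined: with \<open>d\<close> normalised by a constant so that
  \<open>x + d \<sim> x\<close>, delaying \<open>d\<close> and then shifting shows that bringing the sequence \<open>x\<close>
  forward by one period, while keeping \<open>d\<close> in place, cannot hurt.\<close>

lemma const_equiv_shift_ge:
  assumes x: "x \<in> linf" and d: "d \<in> linf"
  shows "const_equiv (\<lambda>n. x n + d n) \<le> const_equiv (\<lambda>n. x (Suc n) + d n)"
proof -
  define a where "a = const_equiv (\<lambda>n. x n + d n) - const_equiv x"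
  define d' where "d' = (\<lambda>n. d n + - a)"
  have d': "d' \<in> linf" unfolding d'_def by (rule linf_add_const[OF d])
  have "(\<lambda>n. x n + d' n) = (\<lambda>n. (x n + d n) + - a)" by (simp add: d'_def fun_eq_iff)
  then have "R (\<lambda>n. x n + d' n) x"
    using const_equiv_add_const[OF linf_add[OF x d], of "-a"]
      R_iff_const_equiv_le[OF linf_add[OF x d'] x] by (simp add: a_def)
  then have "R (\<lambda>n. x n + delay d' n) x" using IDIS x d' unfolding IDIS_def by blast
  then have "const_equiv x \<le> const_equiv (\<lambda>n. x n + delay d' n)"
    using R_iff_const_equiv_le[OF linf_add[OF x linf_delay[OF d']] x] by simp
  also have "\<dots> = const_equiv (\<lambda>n. x (Suc n) + delay d' (Suc n))"
    using const_equiv_shift[OF linf_add[OF x linf_delay[OF d']]] by simp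
  also have "(\<lambda>n. x (Suc n) + delay d' (Suc n)) = (\<lambda>n. (x (Suc n) + d n) + - a)"
    by (simp add: delay_def d'_def fun_eq_iff)
  also have "const_equiv \<dots> = const_equiv (\<lambda>n. x (Suc n) + d n) - a"
    using const_equiv_add_const[OF linf_add[OF linf_shift[OF x] d], of "-a"] by simp
  finally show ?thesis by (simp add: a_def)
qed

lemma const_equiv_add_shift_difference_le:
  assumes x: "x \<in> linf" and z: "z \<in> linf"
  shows "const_equiv (\<lambda>n. x n + (z n - z (Suc n))) \<le> const_equiv x"
proof -
  have "(\<lambda>n. z n + (x n - z (Suc n))) = (\<lambda>n. x n + (z n - z (Suc n)))"
    "(\<lambda>n. z (Suc n) + (x n - z (Suc n))) = x"
    by (simp_all add: fun_eq_iff)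
  then show ?thesis using const_equiv_shift_ge[OF z linf_diff[OF x linf_shift[OF z]]] by simp
qed

end
section \<open>Supergradients and the conjugate cost\<close>

definition shift_differences :: "seq set" where
  "shift_differences = {(\<lambda>n. z n - z (Suc n)) | z. z \<in> linf}"

lemma shift_differences_subset_linf: "shift_differences \<subseteq> linf"
  unfolding shift_differences_def using linf_diff linf_shift by blast

lemma fun_subspace_shift_differences: "fun_subspace shift_differences"
  unfolding fun_subspace_def
proof (intro conjI ballI allI)
  show "shift_differences \<noteq> {}" unfolding shift_differences_def using linf_cst by blast
next
  fix u v a b assume "u \<in> shift_differences" "v \<in> shift_differences"
  then obtain z z' where z: "z \<in> linf" "u = (\<lambda>n. z n - z (Suc n))"
    and z': "z' \<in> linf" "v = (\<lambda>n. z' n - z' (Suc n))"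
    unfolding shift_differences_def by blast
  have "lin_comb a u b v = (\<lambda>n. lin_comb a z b z' n - lin_comb a z b z' (Suc n))"
    unfolding z z' by (simp add: fun_eq_iff algebra_simps)
  then show "lin_comb a u b v \<in> shift_differences"
    unfolding shift_differences_def
    by (intro CollectI exI[of _ "lin_comb a z b z'"] conjI linf_lin_comb z(1) z'(1))
qed

context axiomatic_preference
begin

lemma dominating_functional_supergradient:
  assumes x: "x \<in> linf" and lin: "linear_on linf L"
    and super: "\<And>y. y \<in> linf \<Longrightarrow> const_equiv (\<lambda>n. x n + y n) \<le> const_equiv x + L y"
    and shift_zero: "\<And>u. u \<in> shift_differences \<Longrightarrow> L u = 0"
  shows "\<exists>q\<in>BML. \<forall>y\<in>linf. const_equiv y \<le> const_equiv x + pairing y q - pairing x q"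
proof -
  have pos: "L y \<ge> 0" if y: "y \<in> linf" and "\<And>n. y n \<ge> 0" for y
    using super[OF y] const_equiv_mono[OF x linf_add[OF x y]] that by fastforce
  have one: "L (\<lambda>n. 1) = 1"
  proof -
    have "1 \<le> L (\<lambda>n. 1)" "-1 \<le> L (\<lambda>n. -1)"
      using super[OF linf_const] const_equiv_add_const[OF x] by (simp_all add: add.commute)
    moreover have "L (\<lambda>n. -1) = - L (\<lambda>n. 1)"
      using linear_onD[OF lin linf_const[of 1] linf_const[of 1], where a = "-1" and b = 0] by simp
    ultimately show ?thesis by simp
  qed
  have shift: "L (\<lambda>n. z (Suc n)) = L z" if z: "z \<in> linf" for z
  proof -
    have "L (\<lambda>n. z n - z (Suc n)) = 0" using shift_zero z unfolding shift_differences_def by auto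
    then show ?thesis using linear_onD[OF lin z linf_shift[OF z], of 1 "-1"] by simp
  qed
  define q where "q A = L (indicator A)" for A
  have q: "q \<in> BML" "\<And>y. y \<in> linf \<Longrightarrow> pairing y q = L y"
    unfolding q_def using shift_invariant_positive_functional_BML[OF lin pos one shift]
      positive_functional_pairing[OF lin pos one] by auto
  have "const_equiv y \<le> const_equiv x + pairing y q - pairing x q" if y: "y \<in> linf" for y
    using super[OF linf_diff[OF y x]] q(2)[OF y] q(2)[OF x] linear_onD[OF lin y x, of 1 "-1"]
    by simp
  then show ?thesis using q(1) by blast
qed

text \<open>The dominating functional comes from Hahn--Banach applied to the zero functional on the
  shift differences, which is dominated by \<open>y \<mapsto> const_equiv x - const_equiv (x + y)\<close>
  thanks to IDIS.\<close>

lemma const_equiv_supergradient: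
  assumes x: "x \<in> linf"
  shows "\<exists>q\<in>BML. \<forall>y\<in>linf. const_equiv y \<le> const_equiv x + pairing y q - pairing x q"
proof -
  define p where "p y = const_equiv x - const_equiv (\<lambda>n. x n + y n)" for y
  have "fun_convex_on linf p" unfolding fun_convex_on_def
  proof (intro ballI allI impI)
    fix u v and t :: real assume u: "u \<in> linf" and v: "v \<in> linf" and t: "0 \<le> t \<and> t \<le> 1"
    have "(\<lambda>n. x n + lin_comb t u (1 - t) v n) = lin_comb t (\<lambda>n. x n + u n) (1 - t) (\<lambda>n. x n + v n)"
      by (simp add: fun_eq_iff algebra_simps)
    then show "p (lin_comb t u (1 - t) v) \<le> t * p u + (1 - t) * p v"
      using const_equiv_concave[OF linf_add[OF x u] linf_add[OF x v], of t] t
      unfolding p_def by (simp add: algebra_simps)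
  qed
  moreover have "0 \<le> p u" if "u \<in> shift_differences" for u
    using that const_equiv_add_shift_difference_le[OF x]
    unfolding shift_differences_def p_def by auto
  ultimately obtain F where F: "linear_on linf F" "\<And>u. u \<in> shift_differences \<Longrightarrow> F u = 0"
      "\<And>u. u \<in> linf \<Longrightarrow> F u \<le> p u"
    using hahn_banach[OF fun_subspace_linf fun_subspace_shift_differences
        shift_differences_subset_linf, of "\<lambda>_. 0" p]
    by (auto simp: linear_on_def)
  have "linear_on linf (\<lambda>y. - F y)" using F(1) unfolding linear_on_def by simp
  moreover have "const_equiv (\<lambda>n. x n + y n) \<le> const_equiv x + - F y" if "y \<in> linf" for y
    using F(3)[OF that] unfolding p_def by simp
  ultimately show ?thesis
    using dominating_functional_supergradient[OF x, of "\<lambda>y. - F y"] F(2) by simp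
qed

definition conjugate_cost :: "setfun \<Rightarrow> ereal" where
  "conjugate_cost q = (SUP y\<in>linf. ereal (const_equiv y - pairing y q))"

lemma conjugate_cost_ge: "y \<in> linf \<Longrightarrow> ereal (const_equiv y - pairing y q) \<le> conjugate_cost q"
  unfolding conjugate_cost_def by (rule SUP_upper)

lemma conjugate_cost_nonneg: "q \<in> fa_prob \<Longrightarrow> 0 \<le> conjugate_cost q"
  using conjugate_cost_ge[OF linf_cst, of 0 q] const_equiv_cst[of 0] pairing_cst[of q 0]
  by (simp add: zero_ereal_def)

lemma conjugate_cost_supergradient:
  assumes x: "x \<in> linf" and q: "\<forall>y\<in>linf. const_equiv y \<le> const_equiv x + pairing y q - pairing x q"
  shows "conjugate_cost q = ereal (const_equiv x - pairing x q)"
proof (rule antisym)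
  show "conjugate_cost q \<le> ereal (const_equiv x - pairing x q)"
    unfolding conjugate_cost_def by (rule SUP_least) (use q in auto)
  show "ereal (const_equiv x - pairing x q) \<le> conjugate_cost q" by (rule conjugate_cost_ge[OF x])
qed

lemma var_I_conjugate_cost:
  assumes x: "x \<in> linf"
  shows "var_I conjugate_cost x = ereal (const_equiv x)"
    and "\<exists>q\<in>BML. ereal (pairing x q) + conjugate_cost q = var_I conjugate_cost x"
proof -
  obtain q where q: "q \<in> BML" "\<forall>y\<in>linf. const_equiv y \<le> const_equiv x + pairing y q - pairing x q"
    using const_equiv_supergradient[OF x] by blast
  have attained: "ereal (pairing x q) + conjugate_cost q = ereal (const_equiv x)"
    using conjugate_cost_supergradient[OF x q(2)] by simp
  have "ereal (const_equiv x) \<le> ereal (pairing x p) + conjugate_cost p" for p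
    using add_left_mono[OF conjugate_cost_ge[OF x, of p], of "ereal (pairing x p)"] by simp
  then have "var_I conjugate_cost x = ereal (const_equiv x)"
    unfolding var_I_def using INF_lower[OF q(1), of "\<lambda>p. ereal (pairing x p) + conjugate_cost p"] attained
    by (intro antisym INF_greatest) auto
  then show "var_I conjugate_cost x = ereal (const_equiv x)"
    and "\<exists>q\<in>BML. ereal (pairing x q) + conjugate_cost q = var_I conjugate_cost x"
    using attained q(1) by auto
qed

end

lemma topspace_weak_star: "topspace weak_star = UNIV"
proof -
  have "{\<mu>. pairing (cst 0) \<mu> \<in> UNIV} \<in> {{\<mu>. pairing x \<mu> \<in> U} | x U. x \<in> linf \<and> open U}"
    using linf_cst by blast
  then show ?thesis unfolding weak_star_def by auto
qed

lemma openin_weak_star_pairing: "x \<in> linf \<Longrightarrow> open U \<Longrightarrow> openin weak_star {\<mu>. pairing x \<mu> \<in> U}"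
  unfolding weak_star_def by (rule topology_generated_by_Basis) blast

context axiomatic_preference
begin

text \<open>Lower semicontinuity: \<open>conjugate_cost\<close> is a supremum of weak-star continuous functions.\<close>

lemma conjugate_cost_lsc: "weak_star_lsc conjugate_cost"
  unfolding weak_star_lsc_def
proof
  fix t :: ereal
  define U where "U y = {v::real. t < ereal (const_equiv y - v)}" for y
  have "open (U y)" for y
  proof (cases t)
    case (real r)
    then have "U y = {..< const_equiv y - r}" unfolding U_def by auto
    then show ?thesis by simp
  qed (auto simp: U_def)
  then have "openin weak_star (\<Union>y\<in>linf. {\<mu>. pairing y \<mu> \<in> U y})"
    by (intro openin_Union) (auto intro: openin_weak_star_pairing)
  moreover have "conjugate_cost p \<le> t \<longleftrightarrow> p \<notin> (\<Union>y\<in>linf. {\<mu>. pairing y \<mu> \<in> U y})" for p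
    unfolding conjugate_cost_def not_less[symmetric] less_SUP_iff U_def by simp
  ultimately have "openin (subtopology weak_star BML) (BML - {p \<in> BML. conjugate_cost p \<le> t})"
    unfolding openin_subtopology by (intro exI[of _ "\<Union>y\<in>linf. {\<mu>. pairing y \<mu> \<in> U y}"]) auto
  then show "closedin (subtopology weak_star BML) {p \<in> BML. conjugate_cost p \<le> t}"
    unfolding closedin_def by (auto simp: topspace_subtopology topspace_weak_star)
qed

lemma conjugate_cost_convex: "convex_cost conjugate_cost"
  unfolding convex_cost_def
proof (intro ballI)
  fix p q t assume p: "p \<in> BML" and q: "q \<in> BML" and t: "t \<in> {0<..<1::real}"
  let ?m = "\<lambda>A. t * p A + (1 - t) * q A"
  show "conjugate_cost ?m \<le> ereal t * conjugate_cost p + ereal (1 - t) * conjugate_cost q"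
    unfolding conjugate_cost_def[where q = ?m]
  proof (rule SUP_least)
    fix y assume y: "y \<in> linf"
    have "ereal (const_equiv y - pairing y ?m)
        = ereal t * ereal (const_equiv y - pairing y p) + ereal (1 - t) * ereal (const_equiv y - pairing y q)"
      using pairing_mix[OF y BML_fa_prob[OF p] BML_fa_prob[OF q]] t by (simp add: algebra_simps)
    also have "\<dots> \<le> ereal t * conjugate_cost p + ereal (1 - t) * conjugate_cost q"
      using t by (intro add_mono ereal_mult_left_mono conjugate_cost_ge[OF y]) auto
    finally show "ereal (const_equiv y - pairing y ?m) \<le> ereal t * conjugate_cost p + ereal (1 - t) * conjugate_cost q" .
  qed
qed

lemma conjugate_cost_grounded: "grounded conjugate_cost"
proof -
  obtain q where q: "q \<in> BML" "\<forall>y\<in>linf. const_equiv y \<le> const_equiv (cst 0) + pairing y q - pairing (cst 0) q"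
    using const_equiv_supergradient[OF linf_cst] by blast
  have "conjugate_cost q = 0"
    using conjugate_cost_supergradient[OF linf_cst q(2)] const_equiv_cst pairing_cst[OF BML_fa_prob[OF q(1)]]
    by (simp add: zero_ereal_def)
  then show ?thesis unfolding grounded_def
    using q(1) conjugate_cost_nonneg[OF BML_fa_prob] by (intro antisym INF_lower2 INF_greatest) auto
qed

lemma conjugate_cost_admissible: "admissible_cost conjugate_cost"
  unfolding admissible_cost_def
  using conjugate_cost_nonneg[OF BML_fa_prob] conjugate_cost_grounded conjugate_cost_lsc
    conjugate_cost_convex by blast

lemma conjugate_cost_min_represents: "min_represents conjugate_cost R"
  unfolding min_represents_def
  using var_I_conjugate_cost const_equiv R_iff_const_equiv_le by simp

end
section \<open>Uniqueness of the cost\<close>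

definition l1_dist_to :: "'j set \<Rightarrow> ('j \<Rightarrow> real) set \<Rightarrow> ('j \<Rightarrow> real) \<Rightarrow> real" where
  "l1_dist_to D C v = Inf ((\<lambda>w. \<Sum>j\<in>D. \<bar>v j - w j\<bar>) ` C)"

lemma l1_dist_to_le: "w \<in> C \<Longrightarrow> l1_dist_to D C v \<le> (\<Sum>j\<in>D. \<bar>v j - w j\<bar>)"
  unfolding l1_dist_to_def by (rule cInf_lower) (auto intro!: bdd_belowI[of _ 0] sum_nonneg)

lemma l1_dist_to_ge:
  "C \<noteq> {} \<Longrightarrow> (\<And>w. w \<in> C \<Longrightarrow> b \<le> (\<Sum>j\<in>D. \<bar>v j - w j\<bar>)) \<Longrightarrow> b \<le> l1_dist_to D C v"
  unfolding l1_dist_to_def by (rule cInf_greatest) auto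

lemma l1_dist_to_convex:
  assumes ne: "C \<noteq> {}"
    and convex: "\<And>w1 w2 t. w1 \<in> C \<Longrightarrow> w2 \<in> C \<Longrightarrow> 0 \<le> t \<Longrightarrow> t \<le> 1 \<Longrightarrow> lin_comb t w1 (1 - t) w2 \<in> C"
  shows "fun_convex_on W (l1_dist_to D C)"
  unfolding fun_convex_on_def
proof (intro ballI allI impI)
  fix u v and t :: real assume t: "0 \<le> t \<and> t \<le> 1"
  let ?N = "\<lambda>v. \<Sum>j\<in>D. \<bar>v j\<bar>"
  have approx: "\<exists>w\<in>C. ?N (\<lambda>j. v j - w j) < l1_dist_to D C v + e" if "e > 0" for v e
  proof -
    have bdd: "bdd_below ((\<lambda>w. ?N (\<lambda>j. v j - w j)) ` C)" by (auto intro!: bdd_belowI[of _ 0] sum_nonneg)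
    have "l1_dist_to D C v < l1_dist_to D C v + e" using that by simp
    then show ?thesis unfolding l1_dist_to_def using ne bdd by (subst (asm) cInf_less_iff) auto
  qed
  show "l1_dist_to D C (lin_comb t u (1 - t) v) \<le> t * l1_dist_to D C u + (1 - t) * l1_dist_to D C v"
  proof (rule le_by_multiple_epsilon[of _ _ 1])
    fix e :: real assume e: "e > 0"
    obtain w1 where w1: "w1 \<in> C" "?N (\<lambda>j. u j - w1 j) < l1_dist_to D C u + e" using approx[OF e] by blast
    obtain w2 where w2: "w2 \<in> C" "?N (\<lambda>j. v j - w2 j) < l1_dist_to D C v + e" using approx[OF e] by blast
    have "lin_comb t w1 (1 - t) w2 \<in> C" using convex[OF w1(1) w2(1)] t by blast
    from l1_dist_to_le[OF this, of D "lin_comb t u (1 - t) v"]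
    have "l1_dist_to D C (lin_comb t u (1 - t) v)
        \<le> (\<Sum>j\<in>D. \<bar>t * (u j - w1 j) + (1 - t) * (v j - w2 j)\<bar>)"
      by (simp add: algebra_simps)
    also have "\<dots> \<le> (\<Sum>j\<in>D. t * \<bar>u j - w1 j\<bar> + (1 - t) * \<bar>v j - w2 j\<bar>)"
    proof (rule sum_mono)
      fix j
      have "\<bar>t * (u j - w1 j) + (1 - t) * (v j - w2 j)\<bar> \<le> \<bar>t * (u j - w1 j)\<bar> + \<bar>(1 - t) * (v j - w2 j)\<bar>"
        by (rule abs_triangle_ineq)
      also have "\<dots> = t * \<bar>u j - w1 j\<bar> + (1 - t) * \<bar>v j - w2 j\<bar>" using t by (simp add: abs_mult)
      finally show "\<bar>t * (u j - w1 j) + (1 - t) * (v j - w2 j)\<bar> \<le> t * \<bar>u j - w1 j\<bar> + (1 - t) * \<bar>v j - w2 j\<bar>" .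
    qed
    also have "\<dots> = t * ?N (\<lambda>j. u j - w1 j) + (1 - t) * ?N (\<lambda>j. v j - w2 j)"
      by (simp add: sum.distrib sum_distrib_left)
    also have "\<dots> \<le> t * (l1_dist_to D C u + e) + (1 - t) * (l1_dist_to D C v + e)"
      using w1(2) w2(2) t by (intro add_mono mult_left_mono) auto
    finally show "l1_dist_to D C (lin_comb t u (1 - t) v) \<le> t * l1_dist_to D C u + (1 - t) * l1_dist_to D C v + 1 * e"
      by (simp add: algebra_simps)
  qed simp
qed

lemma linear_on_finite_support:
  fixes F :: "('j \<Rightarrow> real) \<Rightarrow> real"
  assumes F: "linear_on W F" and W: "W = {v. \<forall>j. j \<notin> D \<longrightarrow> v j = 0}" and D: "finite D" and w: "w \<in> W"
  shows "F w = (\<Sum>k\<in>D. F (\<lambda>i. if i = k then 1 else 0) * w k)"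
proof -
  define e where "e k = (\<lambda>i. if i = k then 1 else (0::real))" for k :: 'j
  have eW: "\<And>k. k \<in> D \<Longrightarrow> e k \<in> W" unfolding W e_def by auto
  have "fun_subspace W" unfolding fun_subspace_def W by auto
  have w_eq: "w = (\<lambda>i. \<Sum>k\<in>D. w k * e k i)"
  proof
    fix i
    show "w i = (\<Sum>k\<in>D. w k * e k i)"
    proof (cases "i \<in> D")
      case True
      have "(\<Sum>k\<in>D. w k * e k i) = (\<Sum>k\<in>D. if k = i then w i else 0)"
        by (intro sum.cong refl) (auto simp: e_def)
      then show ?thesis using True D by simp
    next
      case False
      have "(\<Sum>k\<in>D. w k * e k i) = 0" by (rule sum.neutral) (use False in \<open>auto simp: e_def\<close>)
      then show ?thesis using w False unfolding W by simp
    qed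
  qed
  have "F w = (\<Sum>k\<in>D. F (\<lambda>i. w k * e k i))"
    using w_eq linear_on_sum[OF F \<open>fun_subspace W\<close> D, of "\<lambda>k i. w k * e k i"]
      fun_subspaceD[OF \<open>fun_subspace W\<close> eW eW, of _ _ 0] by simp
  also have "\<dots> = (\<Sum>k\<in>D. F (e k) * w k)"
    using linear_onD[OF F eW eW, of _ _ 0] by (intro sum.cong refl) simp
  finally show ?thesis unfolding e_def .
qed

text \<open>A convex set of vectors supported on the finite set \<open>D\<close>, at \<open>\<ell>\<^sub>1\<close>-distance at least
  \<open>\<epsilon>\<close> from the origin, is strictly separated from it: Hahn--Banach applied to the convex
  distance function minus its value at the origin gives the separating functional.\<close>

lemma finite_support_convex_separation:
  fixes C :: "('j \<Rightarrow> real) set"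
  assumes D: "finite D" and ne: "C \<noteq> {}" and supp: "\<And>w j. w \<in> C \<Longrightarrow> j \<notin> D \<Longrightarrow> w j = 0"
    and convex: "\<And>w1 w2 t. w1 \<in> C \<Longrightarrow> w2 \<in> C \<Longrightarrow> 0 \<le> t \<Longrightarrow> t \<le> 1 \<Longrightarrow> lin_comb t w1 (1 - t) w2 \<in> C"
    and far: "\<And>w. w \<in> C \<Longrightarrow> \<epsilon> \<le> (\<Sum>j\<in>D. \<bar>w j\<bar>)"
  shows "\<exists>a. \<forall>w\<in>C. (\<Sum>j\<in>D. a j * w j) \<le> - \<epsilon>"
proof -
  define W where "W = {v :: 'j \<Rightarrow> real. \<forall>j. j \<notin> D \<longrightarrow> v j = 0}"
  define h where "h = l1_dist_to D C"
  have W: "fun_subspace W" unfolding fun_subspace_def W_def by auto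
  have "fun_convex_on W h" unfolding h_def by (rule l1_dist_to_convex[OF ne convex])
  then have cvx: "fun_convex_on W (\<lambda>v. h v - h (\<lambda>j. 0))"
    unfolding fun_convex_on_def by (simp add: algebra_simps)
  have zero: "fun_subspace {\<lambda>j. 0}" "{\<lambda>j. 0} \<subseteq> W" "linear_on {\<lambda>j. 0} (\<lambda>_. 0)"
    by (auto simp: fun_subspace_def W_def linear_on_def)
  obtain F where F: "linear_on W F" "\<And>u. u \<in> W \<Longrightarrow> F u \<le> h u - h (\<lambda>j. 0)"
    using hahn_banach[OF W zero(1,2) zero(3) cvx] by force
  have "(\<Sum>k\<in>D. F (\<lambda>i. if i = k then 1 else 0) * w k) \<le> - \<epsilon>" if w: "w \<in> C" for w
  proof -
    have wW: "w \<in> W" using supp[OF w] unfolding W_def by auto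
    have "h w \<le> 0" using l1_dist_to_le[OF w, of D w] by (simp add: h_def)
    moreover have "\<epsilon> \<le> h (\<lambda>j. 0)"
      unfolding h_def by (rule l1_dist_to_ge[OF ne]) (use far in simp)
    moreover have "F w \<le> h w - h (\<lambda>j. 0)" by (rule F(2)[OF wW])
    moreover have "F w = (\<Sum>k\<in>D. F (\<lambda>i. if i = k then 1 else 0) * w k)"
      by (rule linear_on_finite_support[OF F(1) W_def D wW])
    ultimately show ?thesis by linarith
  qed
  then show ?thesis by (intro exI[of _ "\<lambda>k. F (\<lambda>i. if i = k then 1 else 0)"]) blast
qed
lemma generate_topology_on_pairing_nbhd:
  assumes "generate_topology_on {{\<mu>. pairing x \<mu> \<in> U} | x U. x \<in> linf \<and> open U} V" and "p \<in> V"
  shows "\<exists>X e. finite X \<and> X \<subseteq> linf \<and> e > 0 \<and>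
    (\<forall>q. (\<forall>x\<in>X. \<bar>pairing x q - pairing x p\<bar> < e) \<longrightarrow> q \<in> V)"
  using assms
proof (induction rule: generate_topology_on.induct)
  case (Int a b)
  from Int.IH(1) Int.prems obtain X1 e1 where X1: "finite X1" "X1 \<subseteq> linf" "e1 > 0"
    "\<forall>q. (\<forall>x\<in>X1. \<bar>pairing x q - pairing x p\<bar> < e1) \<longrightarrow> q \<in> a" by blast
  from Int.IH(2) Int.prems obtain X2 e2 where X2: "finite X2" "X2 \<subseteq> linf" "e2 > 0"
    "\<forall>q. (\<forall>x\<in>X2. \<bar>pairing x q - pairing x p\<bar> < e2) \<longrightarrow> q \<in> b" by blast
  have "\<forall>q. (\<forall>x\<in>X1 \<union> X2. \<bar>pairing x q - pairing x p\<bar> < min e1 e2) \<longrightarrow> q \<in> a \<inter> b"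
    using X1(4) X2(4) by auto
  then show ?case using X1(1-3) X2(1-3) by (intro exI[of _ "X1 \<union> X2"] exI[of _ "min e1 e2"]) auto
next
  case (UN K)
  then obtain k where k: "k \<in> K" "p \<in> k" by blast
  from UN.IH[OF k] obtain X e where X: "finite X" "X \<subseteq> linf" "e > 0"
    "\<forall>q. (\<forall>x\<in>X. \<bar>pairing x q - pairing x p\<bar> < e) \<longrightarrow> q \<in> k" by blast
  then show ?case using k(1) by (intro exI[of _ X] exI[of _ e]) blast
next
  case (Basis G)
  then obtain x U where xU: "G = {\<mu>. pairing x \<mu> \<in> U}" "x \<in> linf" "open U" by blast
  then have "\<exists>e>0. \<forall>v. dist v (pairing x p) < e \<longrightarrow> v \<in> U"
    using Basis.prems unfolding open_dist by blast
  then obtain e where e: "e > 0" "\<forall>v. dist v (pairing x p) < e \<longrightarrow> v \<in> U" by blast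
  have "\<forall>q. (\<forall>x'\<in>{x}. \<bar>pairing x' q - pairing x' p\<bar> < e) \<longrightarrow> q \<in> G"
    using e(2) xU(1) by (simp add: dist_real_def)
  then show ?case using xU(2) e(1) by (intro exI[of _ "{x}"] exI[of _ e]) blast
qed simp

lemma weak_star_lsc_nbhd:
  assumes lsc: "weak_star_lsc c" and p: "p \<in> BML" and r: "ereal r < c p"
  shows "\<exists>X e. finite X \<and> X \<subseteq> linf \<and> e > 0 \<and>
    (\<forall>q\<in>BML. (\<forall>x\<in>X. \<bar>pairing x q - pairing x p\<bar> < e) \<longrightarrow> ereal r < c q)"
proof -
  have "closedin (subtopology weak_star BML) {q \<in> BML. c q \<le> ereal r}"
    using lsc unfolding weak_star_lsc_def by blast
  then have "openin (subtopology weak_star BML) (BML - {q \<in> BML. c q \<le> ereal r})"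
    unfolding closedin_def topspace_subtopology topspace_weak_star by simp
  then obtain V where V: "openin weak_star V" "BML - {q \<in> BML. c q \<le> ereal r} = V \<inter> BML"
    unfolding openin_subtopology by blast
  have "p \<in> BML - {q \<in> BML. c q \<le> ereal r}" using p r by (simp add: not_le)
  then have pV: "p \<in> V" using V(2) by blast
  have "generate_topology_on {{\<mu>. pairing x \<mu> \<in> U} | x U. x \<in> linf \<and> open U} V"
    using V(1) unfolding weak_star_def by (simp add: openin_topology_generated_by_iff)
  from generate_topology_on_pairing_nbhd[OF this pV]
  obtain X e where X: "finite X" "X \<subseteq> linf" "e > 0"
    and near: "\<forall>q. (\<forall>x\<in>X. \<bar>pairing x q - pairing x p\<bar> < e) \<longrightarrow> q \<in> V"
    by blast
  have "ereal r < c q" if q: "q \<in> BML" and "\<forall>x\<in>X. \<bar>pairing x q - pairing x p\<bar> < e" for q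
  proof -
    have "q \<in> V \<inter> BML" using near that(2) q by blast
    then show ?thesis unfolding V(2)[symmetric] by (simp add: not_le)
  qed
  then show ?thesis using X by (intro exI[of _ X] exI[of _ e]) blast
qed
definition epigraph_coords :: "seq set \<Rightarrow> setfun \<Rightarrow> real \<Rightarrow> setfun \<Rightarrow> real \<Rightarrow> seq option \<Rightarrow> real" where
  "epigraph_coords X p r q s = (\<lambda>j. case j of None \<Rightarrow> s - r
      | Some x \<Rightarrow> if x \<in> X then pairing x q - pairing x p else 0)"

lemma epigraph_coords_mix:
  assumes X: "X \<subseteq> linf" and q1: "q1 \<in> fa_prob" and q2: "q2 \<in> fa_prob" and t: "0 \<le> t" "t \<le> 1"
  shows "lin_comb t (epigraph_coords X p r q1 s1) (1 - t) (epigraph_coords X p r q2 s2)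
    = epigraph_coords X p r (\<lambda>A. t * q1 A + (1 - t) * q2 A) (t * s1 + (1 - t) * s2)"
proof
  fix j
  show "lin_comb t (epigraph_coords X p r q1 s1) (1 - t) (epigraph_coords X p r q2 s2) j
    = epigraph_coords X p r (\<lambda>A. t * q1 A + (1 - t) * q2 A) (t * s1 + (1 - t) * s2) j"
  proof (cases j)
    case None
    then show ?thesis by (simp add: epigraph_coords_def algebra_simps)
  next
    case (Some x)
    then show ?thesis
      using pairing_mix[OF _ q1 q2 t, of x] X by (auto simp: epigraph_coords_def algebra_simps)
  qed
qed

lemma convex_cost_mix_le:
  assumes c: "convex_cost c" and q1: "q1 \<in> BML" "c q1 \<le> ereal s1" and q2: "q2 \<in> BML" "c q2 \<le> ereal s2"
    and t: "0 \<le> t" "t \<le> 1"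
  shows "c (\<lambda>A. t * q1 A + (1 - t) * q2 A) \<le> ereal (t * s1 + (1 - t) * s2)"
proof -
  consider "t = 0" | "t = 1" | "t \<in> {0<..<1}" using t by fastforce
  then show ?thesis
  proof cases
    case 1
    then show ?thesis using q2 by simp
  next
    case 2
    then show ?thesis using q1 by simp
  next
    case 3
    then have "c (\<lambda>A. t * q1 A + (1 - t) * q2 A) \<le> ereal t * c q1 + ereal (1 - t) * c q2"
      using c q1(1) q2(1) unfolding convex_cost_def by blast
    also have "\<dots> \<le> ereal t * ereal s1 + ereal (1 - t) * ereal s2"
      using t q1(2) q2(2) by (intro add_mono ereal_mult_left_mono) auto
    finally show ?thesis by simp
  qed
qed

lemma epigraph_coords_far:
  assumes X: "finite X" and eps: "\<epsilon> \<le> e0" "\<epsilon> \<le> r2 - r"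
    and gap: "(\<forall>x\<in>X. \<bar>pairing x q - pairing x p\<bar> < e0) \<Longrightarrow> r2 < s"
  shows "\<epsilon> \<le> (\<Sum>j\<in>insert None (Some ` X). \<bar>epigraph_coords X p r q s j\<bar>)"
proof -
  have "\<exists>j\<in>insert None (Some ` X). \<epsilon> \<le> \<bar>epigraph_coords X p r q s j\<bar>"
  proof (cases "\<forall>x\<in>X. \<bar>pairing x q - pairing x p\<bar> < e0")
    case True
    then have "r2 < s" by (rule gap)
    then show ?thesis using eps by (intro bexI[of _ None]) (auto simp: epigraph_coords_def)
  next
    case False
    then obtain x where "x \<in> X" "e0 \<le> \<bar>pairing x q - pairing x p\<bar>" by (auto simp: not_less)
    then show ?thesis using eps by (intro bexI[of _ "Some x"]) (auto simp: epigraph_coords_def)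
  qed
  then obtain j where j: "j \<in> insert None (Some ` X)" "\<epsilon> \<le> \<bar>epigraph_coords X p r q s j\<bar>" by blast
  have "\<bar>epigraph_coords X p r q s j\<bar> \<le> (\<Sum>j\<in>insert None (Some ` X). \<bar>epigraph_coords X p r q s j\<bar>)"
    using j(1) X by (intro member_le_sum) auto
  then show ?thesis using j(2) by linarith
qed

lemma epigraph_coords_sum:
  assumes "finite X"
  shows "(\<Sum>j\<in>insert None (Some ` X). a j * epigraph_coords X p r q s j)
    = a None * (s - r) + (\<Sum>x\<in>X. a (Some x) * (pairing x q - pairing x p))"
  using assms by (simp add: sum.reindex epigraph_coords_def)

lemma admissible_cost_bounded_point:
  assumes "admissible_cost c" shows "\<exists>q\<in>BML. c q \<le> ereal 1"
proof -
  have "(INF q\<in>BML. c q) < 1" using assms unfolding admissible_cost_def grounded_def by simp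
  then show ?thesis by (auto simp: INF_less_iff one_ereal_def intro: less_imp_le)
qed

text \<open>Finite-dimensional separation of the epigraph of an admissible cost from a point
  \<open>(p, r)\<close> strictly below it: lower semicontinuity provides finitely many coordinates
  \<open>x \<in> X\<close> on which the epigraph stays away from \<open>(p, r)\<close>, and the separating functional is
  pulled back to a sequence \<open>y\<close> and a slope \<open>\<beta>\<close>.\<close>

lemma admissible_cost_epigraph_separation:
  assumes adm: "admissible_cost c" and p: "p \<in> BML" and r: "ereal r < c p"
  shows "\<exists>y\<in>linf. \<exists>\<beta> e. e > 0 \<and>
    (\<forall>q\<in>BML. \<forall>s. c q \<le> ereal s \<longrightarrow> e + \<beta> * (s - r) \<le> pairing y q - pairing y p)"
proof -
  obtain r2 where r2: "r < r2" "ereal r2 < c p"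
    using ereal_dense2[OF r] by auto
  have lsc: "weak_star_lsc c" using adm unfolding admissible_cost_def by blast
  obtain X e0 where X: "finite X" "X \<subseteq> linf" "e0 > 0"
    and gap: "\<forall>q\<in>BML. (\<forall>x\<in>X. \<bar>pairing x q - pairing x p\<bar> < e0) \<longrightarrow> ereal r2 < c q"
    using weak_star_lsc_nbhd[OF lsc p r2(2)] by blast
  define \<epsilon> where "\<epsilon> = min e0 (r2 - r)"
  have \<epsilon>: "\<epsilon> > 0" using X(3) r2(1) by (simp add: \<epsilon>_def)
  define D where "D = insert None (Some ` X)"
  define C where "C = {epigraph_coords X p r q s | q s. q \<in> BML \<and> c q \<le> ereal s}"
  have Cne: "C \<noteq> {}" using admissible_cost_bounded_point[OF adm] unfolding C_def by blast
  have supp: "w j = 0" if "w \<in> C" "j \<notin> D" for w j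
    using that unfolding C_def D_def epigraph_coords_def by (cases j) auto
  have convex: "lin_comb t w1 (1 - t) w2 \<in> C"
    if w: "w1 \<in> C" "w2 \<in> C" and t: "0 \<le> t" "t \<le> 1" for w1 w2 t
  proof -
    obtain q1 s1 q2 s2 where q: "w1 = epigraph_coords X p r q1 s1" "q1 \<in> BML" "c q1 \<le> ereal s1"
      "w2 = epigraph_coords X p r q2 s2" "q2 \<in> BML" "c q2 \<le> ereal s2"
      using w unfolding C_def by blast
    show ?thesis
      unfolding q(1,4) epigraph_coords_mix[OF X(2) BML_fa_prob[OF q(2)] BML_fa_prob[OF q(5)] t]
      unfolding C_def
      using BML_mix[OF q(2) q(5) t] convex_cost_mix_le[OF _ q(2,3) q(5,6) t] adm
      by (auto simp: admissible_cost_def)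
  qed
  have far: "\<epsilon> \<le> (\<Sum>j\<in>D. \<bar>w j\<bar>)" if w: "w \<in> C" for w
  proof -
    obtain q s where qs: "w = epigraph_coords X p r q s" "q \<in> BML" "c q \<le> ereal s"
      using w unfolding C_def by blast
    have r2s: "r2 < s" if "\<forall>x\<in>X. \<bar>pairing x q - pairing x p\<bar> < e0"
    proof -
      have "ereal r2 < c q" using gap qs(2) that by blast
      then have "ereal r2 < ereal s" using qs(3) by (rule less_le_trans)
      then show ?thesis by simp
    qed
    show ?thesis unfolding qs(1) D_def by (rule epigraph_coords_far[OF X(1) _ _ r2s]) (simp_all add: \<epsilon>_def)
  qed
  obtain a where a: "\<forall>w\<in>C. (\<Sum>j\<in>D. a j * w j) \<le> - \<epsilon>"
    using finite_support_convex_separation[of D C \<epsilon>] X(1) Cne supp convex far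
    unfolding D_def by blast
  define y where "y n = (\<Sum>x\<in>X. - a (Some x) * x n)" for n
  have y: "y \<in> linf" unfolding y_def using X(1,2) by (intro linf_sum linf_scale) auto
  have pairing_y: "pairing y q = (\<Sum>x\<in>X. - a (Some x) * pairing x q)" if "q \<in> BML" for q
    unfolding y_def
    by (rule pairing_sum[OF X(1) _ BML_fa_prob[OF that], where g = "\<lambda>x. x" and a = "\<lambda>x. - a (Some x)"])
      (use X(2) in blast)
  have "\<epsilon> + a None * (s - r) \<le> pairing y q - pairing y p" if q: "q \<in> BML" "c q \<le> ereal s" for q s
  proof -
    have "epigraph_coords X p r q s \<in> C" unfolding C_def using q by blast
    then have "(\<Sum>j\<in>D. a j * epigraph_coords X p r q s j) \<le> - \<epsilon>" using a by blast
    moreover have "(\<Sum>j\<in>D. a j * epigraph_coords X p r q s j)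
        = a None * (s - r) + (\<Sum>x\<in>X. a (Some x) * (pairing x q - pairing x p))"
      unfolding D_def by (rule epigraph_coords_sum[OF X(1)])
    moreover have "(\<Sum>x\<in>X. a (Some x) * (pairing x q - pairing x p)) = pairing y p - pairing y q"
      unfolding pairing_y[OF q(1)] pairing_y[OF p]
      by (simp add: sum_subtractf[symmetric] algebra_simps)
    ultimately show ?thesis by linarith
  qed
  then show ?thesis using y \<epsilon> by blast
qed

lemma separation_slope_nonpos:
  assumes sep: "\<And>q s. q \<in> BML \<Longrightarrow> c q \<le> ereal s \<Longrightarrow> e + \<beta> * (s - r) \<le> g q"
    and q0: "q0 \<in> BML" "c q0 \<le> ereal s0"
  shows "\<beta> \<le> 0"
proof (rule ccontr)
  assume "\<not> \<beta> \<le> 0"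
  then have \<beta>: "\<beta> > 0" by simp
  define s where "s = max s0 (r + (\<bar>g q0\<bar> + \<bar>e\<bar> + 1) / \<beta>)"
  have "c q0 \<le> ereal s" using q0(2) unfolding s_def by (simp add: order_trans)
  then have "e + \<beta> * (s - r) \<le> g q0" by (rule sep[OF q0(1)])
  moreover have "\<beta> * (s - r) \<ge> \<beta> * ((\<bar>g q0\<bar> + \<bar>e\<bar> + 1) / \<beta>)"
    using \<beta> unfolding s_def by (intro mult_left_mono) auto
  ultimately show False using \<beta> by simp
qed

lemma exists_scale_above:
  fixes \<gamma> e b r :: real
  assumes "0 \<le> \<gamma>" "0 < e" "b < r"
  shows "\<exists>t\<ge>0. t * \<gamma> \<le> 1 \<and> b < t * (e + \<gamma> * r)"
proof (cases "\<gamma> > 0")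
  case True
  then have "1 / \<gamma> * (e + \<gamma> * r) = e / \<gamma> + r" by (simp add: field_simps)
  moreover have "e / \<gamma> > 0" using assms(2) True by simp
  ultimately show ?thesis using True assms(3) by (intro exI[of _ "1 / \<gamma>"]) auto
next
  case False
  then have "\<gamma> = 0" using assms(1) by simp
  moreover have "(\<bar>b\<bar> + 1) / e * e = \<bar>b\<bar> + 1" using assms(2) by simp
  ultimately show ?thesis using assms(2) by (intro exI[of _ "(\<bar>b\<bar> + 1) / e"]) auto
qed

context axiomatic_preference
begin

lemma var_I_eq_const_equiv:
  assumes "min_represents c R" and x: "x \<in> linf" shows "var_I c x = ereal (const_equiv x)"
proof -
  obtain r where "var_I c x = ereal r" "R x (cst r)" "R (cst r) x"
    using assms unfolding min_represents_def by blast
  then show ?thesis using const_equiv_unique[OF x] by simp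
qed

lemma conjugate_cost_le:
  assumes "min_represents c R" and p: "p \<in> BML" shows "conjugate_cost p \<le> c p"
  unfolding conjugate_cost_def
proof (rule SUP_least)
  fix y assume y: "y \<in> linf"
  have "ereal (const_equiv y) \<le> ereal (pairing y p) + c p"
    unfolding var_I_eq_const_equiv[OF assms(1) y, symmetric] var_I_def by (rule INF_lower[OF p])
  then show "ereal (const_equiv y - pairing y p) \<le> c p" by (cases "c p") auto
qed

text \<open>If an admissible representing cost exceeded \<open>conjugate_cost\<close> at \<open>p\<close>, separate its
  epigraph from a point \<open>(p, r)\<close> with \<open>conjugate_cost p < r < c p\<close>. Groundedness forces a
  nonpositive slope \<open>\<beta> = -\<gamma>\<close>, and the separating sequence \<open>y\<close>, suitably scaled, has a
  constant equivalent \<open>var_I c (t y)\<close> that beats \<open>conjugate_cost p + pairing (t y) p\<close>.\<close>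

lemma le_conjugate_cost:
  assumes adm: "admissible_cost c" and mr: "min_represents c R" and p: "p \<in> BML"
  shows "c p \<le> conjugate_cost p"
proof (rule ccontr)
  assume "\<not> c p \<le> conjugate_cost p"
  then have lt: "conjugate_cost p < c p" by simp
  have c_nonneg: "\<And>q. q \<in> BML \<Longrightarrow> 0 \<le> c q" using adm unfolding admissible_cost_def by blast
  obtain cp where cp: "conjugate_cost p = ereal cp"
    using lt conjugate_cost_nonneg[OF BML_fa_prob[OF p]] by (cases "conjugate_cost p") auto
  obtain r where r: "cp < r" "ereal r < c p" using ereal_dense2[OF lt[unfolded cp]] by auto
  obtain y \<beta> e where y: "y \<in> linf" "e > 0"
    and sep: "\<And>q s. q \<in> BML \<Longrightarrow> c q \<le> ereal s \<Longrightarrow> e + \<beta> * (s - r) \<le> pairing y q - pairing y p"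
    using admissible_cost_epigraph_separation[OF adm p r(2)] by blast
  obtain q0 where q0: "q0 \<in> BML" "c q0 \<le> ereal 1"
    using admissible_cost_bounded_point[OF adm] by blast
  have \<beta>: "\<beta> \<le> 0"
    by (rule separation_slope_nonpos[where c = c and e = e and r = r and g = "\<lambda>q. pairing y q - pairing y p",
          OF sep q0])
  define \<gamma> where "\<gamma> = - \<beta>"
  have "0 \<le> \<gamma>" using \<beta> by (simp add: \<gamma>_def)
  then obtain t where t: "0 \<le> t" "t * \<gamma> \<le> 1" "cp < t * (e + \<gamma> * r)"
    using exists_scale_above[of \<gamma> e cp r] y(2) r(1) by blast
  define z where "z n = t * y n" for n
  have z: "z \<in> linf" unfolding z_def by (rule linf_scale[OF y(1)])
  have pz: "pairing z q = t * pairing y q" if "q \<in> BML" for q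
    unfolding z_def by (rule pairing_scale[OF y(1) BML_fa_prob[OF that]])
  have "ereal (t * pairing y p + t * (e + \<gamma> * r)) \<le> ereal (pairing z q) + c q" if q: "q \<in> BML" for q
  proof (cases "c q")
    case (real s)
    have "t * (e + \<beta> * (s - r)) \<le> t * (pairing y q - pairing y p)"
      using sep[OF q] real t(1) by (intro mult_left_mono) auto
    moreover have "0 \<le> s * (1 - t * \<gamma>)" using c_nonneg[OF q] real t(2) by simp
    ultimately show ?thesis using real pz[OF q] by (simp add: \<gamma>_def algebra_simps)
  qed (use c_nonneg[OF q] in auto)
  then have "ereal (t * pairing y p + t * (e + \<gamma> * r)) \<le> var_I c z"
    unfolding var_I_def by (rule INF_greatest)
  then have "t * (e + \<gamma> * r) \<le> const_equiv z - pairing z p"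
    using var_I_eq_const_equiv[OF mr z] pz[OF p] by simp
  also have "ereal \<dots> \<le> conjugate_cost p" by (rule conjugate_cost_ge[OF z])
  finally show False using t(3) cp by simp
qed

lemma admissible_min_represents_unique:
  assumes "admissible_cost c" "min_represents c R" "p \<in> BML"
  shows "c p = conjugate_cost p"
  using le_conjugate_cost[OF assms] conjugate_cost_le[OF assms(2,3)] by (rule antisym)

end
section \<open>Variational preferences satisfy the axioms\<close>

locale min_representation =
  fixes c :: "setfun \<Rightarrow> ereal" and R :: "seq \<Rightarrow> seq \<Rightarrow> bool"
  assumes admissible: "admissible_cost c" and represents: "min_represents c R"
begin

definition utility :: "seq \<Rightarrow> real" where
  "utility x = real_of_ereal (var_I c x)"

lemma cost_nonneg: "p \<in> BML \<Longrightarrow> 0 \<le> c p"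
  using admissible unfolding admissible_cost_def by blast

lemma var_I_eq_utility: "x \<in> linf \<Longrightarrow> var_I c x = ereal (utility x)"
  using represents unfolding min_represents_def utility_def by force

lemma R_iff_utility_le: "x \<in> linf \<Longrightarrow> y \<in> linf \<Longrightarrow> R x y \<longleftrightarrow> utility y \<le> utility x"
  using represents var_I_eq_utility unfolding min_represents_def by simp

lemma utility_le:
  assumes x: "x \<in> linf" and p: "p \<in> BML" and s: "c p = ereal s"
  shows "utility x \<le> pairing x p + s"
proof -
  have "var_I c x \<le> ereal (pairing x p) + c p" unfolding var_I_def by (rule INF_lower[OF p])
  then show ?thesis using var_I_eq_utility[OF x] s by simp
qed

lemma utility_attained:
  assumes x: "x \<in> linf"
  obtains p s where "p \<in> BML" "c p = ereal s" "utility x = pairing x p + s"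
proof -
  obtain p where p: "p \<in> BML" "ereal (pairing x p) + c p = ereal (utility x)"
    using represents x var_I_eq_utility[OF x] unfolding min_represents_def by metis
  then obtain s where "c p = ereal s" by (cases "c p") auto
  then show ?thesis using that p by simp
qed

text \<open>Every property below follows by comparing the minimiser for one sequence with the
  bound \<open>utility_le\<close> for the other.\<close>

lemma utility_cst: "utility (cst t) = t"
proof -
  obtain p s where p: "p \<in> BML" "c p = ereal s" "utility (cst t) = pairing (cst t) p + s"
    using utility_attained[OF linf_cst] by blast
  have s_min: "s \<le> s'" if "q \<in> BML" "c q = ereal s'" for q s'
    using utility_le[OF linf_cst[of t] that] p(3) pairing_cst[OF BML_fa_prob[OF that(1)]]
      pairing_cst[OF BML_fa_prob[OF p(1)]] by simp
  have "ereal s \<le> c q" if q: "q \<in> BML" for q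
    using s_min[OF q] cost_nonneg[OF q] by (cases "c q") auto
  then have "ereal s \<le> (INF q\<in>BML. c q)" by (rule INF_greatest)
  moreover have "0 \<le> s" using cost_nonneg[OF p(1)] p(2) by simp
  ultimately show ?thesis
    using admissible p(3) pairing_cst[OF BML_fa_prob[OF p(1)]]
    unfolding admissible_cost_def grounded_def by simp
qed

lemma utility_mono:
  assumes x: "x \<in> linf" and y: "y \<in> linf" and le: "\<And>n. x n \<le> y n" shows "utility x \<le> utility y"
proof -
  obtain p s where p: "p \<in> BML" "c p = ereal s" "utility y = pairing y p + s"
    using utility_attained[OF y] by blast
  then show ?thesis
    using utility_le[OF x p(1,2)] pairing_mono[OF x y BML_fa_prob[OF p(1)] le] by simp
qed

lemma utility_add_const: assumes x: "x \<in> linf" shows "utility (\<lambda>n. x n + t) = utility x + t"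
proof -
  obtain p s where p: "p \<in> BML" "c p = ereal s" "utility x = pairing x p + s"
    using utility_attained[OF x] by blast
  obtain p' s' where p': "p' \<in> BML" "c p' = ereal s'" "utility (\<lambda>n. x n + t) = pairing (\<lambda>n. x n + t) p' + s'"
    using utility_attained[OF linf_add_const[OF x]] by blast
  show ?thesis
    using utility_le[OF linf_add_const[OF x, of t] p(1,2)] utility_le[OF x p'(1,2)] p(3) p'(3)
      pairing_add_const[OF x BML_fa_prob[OF p(1)]] pairing_add_const[OF x BML_fa_prob[OF p'(1)]]
    by simp
qed

lemma utility_concave:
  assumes x: "x \<in> linf" and y: "y \<in> linf" and t: "0 \<le> t" "t \<le> 1"
  shows "t * utility x + (1 - t) * utility y \<le> utility (lin_comb t x (1 - t) y)"
proof -
  obtain p s where p: "p \<in> BML" "c p = ereal s" "utility (lin_comb t x (1 - t) y) = pairing (lin_comb t x (1 - t) y) p + s"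
    using utility_attained[OF linf_lin_comb[OF x y]] by blast
  have "t * utility x + (1 - t) * utility y \<le> t * (pairing x p + s) + (1 - t) * (pairing y p + s)"
    using utility_le[OF x p(1,2)] utility_le[OF y p(1,2)] t by (intro add_mono mult_left_mono) auto
  also have "\<dots> = utility (lin_comb t x (1 - t) y)"
    using p(3) pairing_lin_comb[OF x y BML_fa_prob[OF p(1)], of t "1 - t"] by (simp add: algebra_simps)
  finally show ?thesis .
qed

lemma utility_pairing_eq:
  assumes x: "x \<in> linf" and y: "y \<in> linf" and eq: "\<And>p. p \<in> BML \<Longrightarrow> pairing x p = pairing y p"
  shows "utility x = utility y"
proof -
  obtain p s where p: "p \<in> BML" "c p = ereal s" "utility x = pairing x p + s"
    using utility_attained[OF x] by blast
  obtain p' s' where p': "p' \<in> BML" "c p' = ereal s'" "utility y = pairing y p' + s'"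
    using utility_attained[OF y] by blast
  show ?thesis
    using utility_le[OF x p'(1,2)] utility_le[OF y p(1,2)] p(3) p'(3) eq[OF p(1)] eq[OF p'(1)] by simp
qed

lemma utility_lipschitz:
  assumes x: "x \<in> linf" and y: "y \<in> linf" and B: "\<And>n. \<bar>x n - y n\<bar> \<le> B"
  shows "\<bar>utility x - utility y\<bar> \<le> B"
proof -
  have le: "utility x \<le> utility y + B"
    if x: "x \<in> linf" and y: "y \<in> linf" and B: "\<And>n. \<bar>x n - y n\<bar> \<le> B" for x y
  proof -
    obtain p s where p: "p \<in> BML" "c p = ereal s" "utility y = pairing y p + s"
      using utility_attained[OF y] by blast
    then show ?thesis
      using utility_le[OF x p(1,2)] pairing_lipschitz[OF x y BML_fa_prob[OF p(1)] B] by (simp add: abs_le_iff)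
  qed
  have "\<bar>y n - x n\<bar> \<le> B" for n using B[of n] by (simp add: abs_minus_commute)
  then show ?thesis using le[OF x y B] le[OF y x] by (simp add: abs_le_iff)
qed

lemma R_continuity: "continuity R"
  unfolding continuity_def
proof (intro ballI impI conjI)
  fix x y z assume x: "x \<in> linf" and y: "y \<in> linf" and z: "z \<in> linf"
  let ?m = "\<lambda>\<alpha>::real. lin_comb \<alpha> x (1 - \<alpha>) z"
  obtain B where B: "\<And>n. \<bar>x n - z n\<bar> \<le> B" using linf_boundE[OF linf_diff[OF x z]] by blast
  have "B-lipschitz_on UNIV (\<lambda>\<alpha>. utility (?m \<alpha>))"
  proof (rule lipschitz_onI)
    fix a b :: real
    have "\<bar>?m a n - ?m b n\<bar> \<le> B * \<bar>a - b\<bar>" for n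
    proof -
      have "\<bar>?m a n - ?m b n\<bar> = \<bar>a - b\<bar> * \<bar>x n - z n\<bar>" by (simp add: algebra_simps abs_mult[symmetric])
      also have "\<dots> \<le> \<bar>a - b\<bar> * B" using B[of n] by (intro mult_left_mono) auto
      finally show ?thesis by (simp add: mult.commute)
    qed
    then show "dist (utility (?m a)) (utility (?m b)) \<le> B * dist a b"
      unfolding dist_real_def by (intro utility_lipschitz linf_lin_comb x z)
  qed (use B[of 0] in linarith)
  then have cont: "continuous_on UNIV (\<lambda>\<alpha>. utility (?m \<alpha>))" by (rule lipschitz_on_continuous_on)
  have "{\<alpha> \<in> {0..1}. R (?m \<alpha>) y} = {0..1} \<inter> {\<alpha>. utility y \<le> utility (?m \<alpha>)}"
    "{\<alpha> \<in> {0..1}. R y (?m \<alpha>)} = {0..1} \<inter> {\<alpha>. utility (?m \<alpha>) \<le> utility y}"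
    using R_iff_utility_le[OF linf_lin_comb[OF x z] y] R_iff_utility_le[OF y linf_lin_comb[OF x z]] by auto
  then show "closed {\<alpha> \<in> {0..1}. R (?m \<alpha>) y}" "closed {\<alpha> \<in> {0..1}. R y (?m \<alpha>)}"
    by (auto intro!: closed_Int closed_Collect_le cont continuous_on_const)
qed

lemma R_convexity: "convexity R"
  unfolding convexity_def
proof (intro ballI allI impI)
  fix x y t \<theta> assume x: "x \<in> linf" and y: "y \<in> linf" and t: "t \<in> {0..1::real}"
    and h: "R x (cst \<theta>) \<and> R y (cst \<theta>)"
  have "\<theta> \<le> utility x" "\<theta> \<le> utility y"
    using h R_iff_utility_le[OF x linf_cst] R_iff_utility_le[OF y linf_cst] utility_cst by auto
  then have "t * \<theta> + (1 - t) * \<theta> \<le> t * utility x + (1 - t) * utility y"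
    using t by (intro add_mono mult_left_mono) auto
  also have "\<dots> \<le> utility (lin_comb t x (1 - t) y)" using utility_concave[OF x y] t by auto
  finally have "\<theta> \<le> utility (lin_comb t x (1 - t) y)" by (simp add: algebra_simps)
  then show "R (lin_comb t x (1 - t) y) (cst \<theta>)"
    unfolding R_iff_utility_le[OF linf_lin_comb[OF x y] linf_cst] utility_cst .
qed

text \<open>Banach--Mazur limits do not see a delay, so \<open>x + delay d\<close> and \<open>x + d\<close> have the same utility.\<close>

lemma R_IDIS: "IDIS R"
  unfolding IDIS_def
proof (intro ballI impI)
  fix x d assume x: "x \<in> linf" and d: "d \<in> linf" and h: "R (\<lambda>n. x n + d n) x"
  have "utility (\<lambda>n. x n + delay d n) = utility (\<lambda>n. x n + d n)"
  proof (rule utility_pairing_eq[OF linf_add[OF x linf_delay[OF d]] linf_add[OF x d]])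
    fix p assume p: "p \<in> BML"
    have "pairing (delay d) p = pairing d p"
      using BML_pairing_shift[OF p linf_delay[OF d]] by (simp add: delay_def)
    then show "pairing (\<lambda>n. x n + delay d n) p = pairing (\<lambda>n. x n + d n) p"
      using pairing_add[OF x linf_delay[OF d] BML_fa_prob[OF p]] pairing_add[OF x d BML_fa_prob[OF p]]
      by simp
  qed
  then show "R (\<lambda>n. x n + delay d n) x"
    using h R_iff_utility_le[OF linf_add[OF x d] x] R_iff_utility_le[OF linf_add[OF x linf_delay[OF d]] x]
    by simp
qed

lemma preference_axioms: "weak_order R \<and> monotonicity R \<and> continuity R \<and> ICRP R \<and> convexity R \<and>
    IDIS R \<and> time_invariance R"
proof (intro conjI R_continuity R_convexity R_IDIS)
  show "weak_order R" unfolding weak_order_def using R_iff_utility_le by auto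
  show "monotonicity R" unfolding monotonicity_def
    using R_iff_utility_le utility_mono linf_cst utility_cst by auto
  show "ICRP R" unfolding ICRP_def
    using R_iff_utility_le linf_add_const utility_add_const by auto
  have "utility (\<lambda>n. x (Suc n)) = utility x" if "x \<in> linf" for x
    using utility_pairing_eq[OF linf_shift[OF that] that] BML_pairing_shift[OF _ that] by blast
  then show "time_invariance R" unfolding time_invariance_def
    using R_iff_utility_le linf_shift by auto
qed

end

theorem proposition7:
  fixes R :: "seq \<Rightarrow> seq \<Rightarrow> bool"
  shows "(weak_order R \<and> monotonicity R \<and> continuity R \<and> ICRP R \<and> convexity R \<and>
          IDIS R \<and> time_invariance R) \<longleftrightarrow>
         (\<exists>c. admissible_cost c \<and> min_represents c R \<and>
              (\<forall>c'. admissible_cost c' \<and> min_represents c' R \<longrightarrow> (\<forall>p\<in>BML. c' p = c p)))"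
proof
  assume "weak_order R \<and> monotonicity R \<and> continuity R \<and> ICRP R \<and> convexity R \<and>
    IDIS R \<and> time_invariance R"
  then interpret axiomatic_preference R by unfold_locales auto
  show "\<exists>c. admissible_cost c \<and> min_represents c R \<and>
      (\<forall>c'. admissible_cost c' \<and> min_represents c' R \<longrightarrow> (\<forall>p\<in>BML. c' p = c p))"
    using conjugate_cost_admissible conjugate_cost_min_represents admissible_min_represents_unique
    by blast
next
  assume "\<exists>c. admissible_cost c \<and> min_represents c R \<and>
    (\<forall>c'. admissible_cost c' \<and> min_represents c' R \<longrightarrow> (\<forall>p\<in>BML. c' p = c p))"
  then obtain c where "admissible_cost c" "min_represents c R" by blast
  then interpret min_representation c R by unfold_locales
  show "weak_order R \<and> monotonicity R \<and> continuity R \<and> ICRP R \<and> convexity R \<and>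
      IDIS R \<and> time_invariance R"
    by (rule preference_axioms)
qed
end
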